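(* Let $\mathcal{D}$ be a generalised dyadic system, $\nu$ a Radon measure on $\mathbb{R}$ dyadically doubling relative to $\mathcal{D}$, and $\mu = g\,d\nu$ with $g\ge0$, $g\in L^2(\nu)$. Then $\mathcal{S}_{\mathcal{D},\nu}(\mu)(x) := \big(\sum_{I\in\mathcal{D}}\alpha^2_{\mu,\nu}(I)\chi_I(x)\big)^{1/2}$ is finite for $\mu$-almost every $x\in\mathbb{R}$.
   Context: A generalised dyadic system is a family $\mathcal{D}=\bigcup_{k\ge0}\mathcal{D}_k$ of half-open intervals such that each $\mathcal{D}_k$ is a partition of $\mathbb{R}$ into intervals of length $2^{-k}$, and each $I\in\mathcal{D}_k$ is the union of two intervals of $\mathcal{D}_{k+1}$. $\nu$ is dyadically doubling relative to $\mathcal{D}$ if $\nu(\hat I)\le C\nu(I)$ for every $I\in\mathcal{D}_k$, $k\ge1$, with $\hat I\in\mathcal{D}_{k-1}$ the interval containing $I$. Wasserstein distance: $\mathbb{W}_1(\nu_1,\nu_2) := \sup_\psi |\int\psi\,d\nu_1 - \int\psi\,d\nu_2|$ over all $1$-Lipschitz $\psi\colon\mathbb{R}\to\mathbb{R}$ supported on $[0,1]$. $T_I$ is the increasing affine map from $\overline I$ onto $[0,1]$, $\mu_I := T_{I\sharp}(\mu|_I)/\mu(I)$, $\nu_I := T_{I\sharp}(\nu|_I)/\nu(I)$ (zero if the mass vanishes), $\alpha_{\mu,\nu}(I) := \mathbb{W}_1(\mu_I,\nu_I)$. *)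

theory Defs
  imports "HOL-Analysis.Analysis"
begin

definition gen_dyadic_system :: "(nat \<Rightarrow> real set set) \<Rightarrow> bool" where
  "gen_dyadic_system D \<longleftrightarrow>
     (\<forall>k. (\<forall>I\<in>D k. \<exists>a. I = {a..<a + inverse (2 ^ k)})
        \<and> (\<forall>x::real. \<exists>!I. I \<in> D k \<and> x \<in> I)
        \<and> (\<forall>I\<in>D k. \<exists>J1\<in>D (Suc k). \<exists>J2\<in>D (Suc k). J1 \<noteq> J2 \<and> I = J1 \<union> J2))"

definition radon_measure :: "real measure \<Rightarrow> bool" where
  "radon_measure M \<longleftrightarrow> sets M = sets borel \<and> (\<forall>K. compact K \<longrightarrow> emeasure M K < \<infinity>)"

definition dyadically_doubling :: "(nat \<Rightarrow> real set set) \<Rightarrow> real measure \<Rightarrow> bool" where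
  "dyadically_doubling D M \<longleftrightarrow>
     (\<exists>C. \<forall>k\<ge>1. \<forall>I\<in>D k. \<forall>J\<in>D (k - 1). I \<subseteq> J \<longrightarrow> measure M J \<le> C * measure M I)"

definition W1 :: "real measure \<Rightarrow> real measure \<Rightarrow> real" where
  "W1 M1 M2 = Sup {\<bar>(\<integral>x. \<psi> x \<partial>M1) - (\<integral>x. \<psi> x \<partial>M2)\<bar> | \<psi>.
       1-lipschitz_on UNIV \<psi> \<and> (\<forall>x. x \<notin> {0..1} \<longrightarrow> \<psi> x = 0)}"

definition T_map :: "real set \<Rightarrow> real \<Rightarrow> real" where
  "T_map I x = (x - Inf I) / (Sup I - Inf I)"

definition blowup :: "real measure \<Rightarrow> real set \<Rightarrow> real measure" where
  "blowup M I = (if measure M I = 0 then null_measure borel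
     else scale_measure (ennreal (1 / measure M I))
            (distr (restrict_space M I) borel (T_map I)))"

definition alpha :: "real measure \<Rightarrow> real measure \<Rightarrow> real set \<Rightarrow> real" where
  "alpha \<mu> \<nu> I = W1 (blowup \<mu> I) (blowup \<nu> I)"

end

theory Submission
  imports Defs
begin

text \<open>For a dyadic interval \<open>I\<close> let \<open>c(I) = \<mu>(I) / \<nu>(I)\<close>. Testing \<open>\<alpha>(I)\<close> against a 1-Lipschitz
  \<open>\<psi>\<close> sampled at the points \<open>i/2^n\<close> and summing by parts down the dyadic tree bounds
  \<open>\<alpha>(I) \<mu>(I)\<close> by the mass defects \<open>|\<mu>(J') - c(J) \<nu>(J')|\<close> of the descendants \<open>J\<close> of \<open>I\<close>
  and their children \<open>J'\<close>, weighted by the relative side length of \<open>J\<close>. By Cauchy--Schwarz a defect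
  is at most \<open>(\<nu>(J) E(J))^(1/2)\<close>, where \<open>E(J) = \<Sum> \<nu>(J') (c(J') - c(J))\<^sup>2\<close> is the energy of the
  martingale of averages, and optimising an AM--GM splitting gives
  \<open>\<alpha>(I)\<^sup>2 \<mu>(I)\<^sup>2 / \<nu>(I) \<le> 2 \<Sum>\<^sub>r 2^-r \<Sum>{E(J) | J \<subseteq> I of depth r}\<close>. Since
  \<open>E(J) + \<mu>(J)\<^sup>2 / \<nu>(J) = \<Sum> \<mu>(J')\<^sup>2 / \<nu>(J')\<close> and \<open>\<mu>(J)\<^sup>2 / \<nu>(J) \<le> \<integral>\<^sub>J g\<^sup>2 d\<nu>\<close>, the energies of all
  intervals sum to at most \<open>\<integral> g\<^sup>2 d\<nu>\<close>; hence \<open>\<integral> \<Sum>\<^sub>k \<alpha>(I\<^sub>k(x))\<^sup>2 \<cdot> inf\<^sub>k c(I\<^sub>k(x)) d\<mu> \<le> 4 \<integral> g\<^sup>2 d\<nu>\<close>.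
  A stopping-time argument shows \<open>inf\<^sub>k c(I\<^sub>k(x)) > 0\<close> for \<open>\<mu>\<close>-almost every \<open>x\<close>.\<close>

section \<open>Dyadic intervals\<close>

definition dyadic_interval :: "real \<Rightarrow> nat \<Rightarrow> int \<Rightarrow> real set" where
  "dyadic_interval a k j = {a + real_of_int j / 2^k ..< a + (real_of_int j + 1) / 2^k}"

definition dyadic_index :: "real \<Rightarrow> nat \<Rightarrow> real \<Rightarrow> int" where
  "dyadic_index a k x = \<lfloor>(x - a) * 2^k\<rfloor>"

lemma mem_dyadic_interval_iff: "x \<in> dyadic_interval a k j \<longleftrightarrow> j = dyadic_index a k x"
proof -
  have "x \<in> dyadic_interval a k j \<longleftrightarrow> real_of_int j \<le> (x - a) * 2^k \<and> (x - a) * 2^k < real_of_int j + 1"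
    unfolding dyadic_interval_def by (auto simp: field_simps)
  also have "\<dots> \<longleftrightarrow> j = dyadic_index a k x"
    unfolding dyadic_index_def by (auto intro!: floor_unique[symmetric])
  finally show ?thesis .
qed

lemma mem_dyadic_interval_index: "x \<in> dyadic_interval a k (dyadic_index a k x)"
  by (simp add: mem_dyadic_interval_iff)

lemma dyadic_index_add_div: "dyadic_index a (k + n) x div 2^n = dyadic_index a k x"
proof -
  have "dyadic_index a (k + n) x div 2^n = \<lfloor>(x - a) * 2^(k + n) / real_of_int (2^n)\<rfloor>"
    unfolding dyadic_index_def by (subst floor_divide_real_eq_div) auto
  also have "(x - a) * 2^(k + n) / real_of_int (2^n) = (x - a) * 2^k"
    by (simp add: power_add)
  finally show ?thesis unfolding dyadic_index_def .
qed

lemma dyadic_index_ancestor: "k' \<le> k \<Longrightarrow> dyadic_index a k x div 2^(k - k') = dyadic_index a k' x"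
  using dyadic_index_add_div[of a k' "k - k'" x] by simp

lemma dyadic_interval_descendant:
  assumes "0 \<le> i" "i < 2^n"
  shows "dyadic_interval a (k + n) (2^n * j + i) \<subseteq> dyadic_interval a k j"
proof
  fix x assume "x \<in> dyadic_interval a (k + n) (2^n * j + i)"
  then have "dyadic_index a k x = (2^n * j + i) div 2^n"
    by (simp add: mem_dyadic_interval_iff dyadic_index_add_div)
  also have "\<dots> = j" using assms by simp
  finally show "x \<in> dyadic_interval a k j" by (simp add: mem_dyadic_interval_iff)
qed

lemma dyadic_interval_children:
  "dyadic_interval a k j = dyadic_interval a (Suc k) (2*j) \<union> dyadic_interval a (Suc k) (2*j + 1)"
proof (rule set_eqI)
  fix x
  have "dyadic_index a (k + 1) x div 2^1 = dyadic_index a k x" by (rule dyadic_index_add_div)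
  then show "x \<in> dyadic_interval a k j \<longleftrightarrow>
      x \<in> dyadic_interval a (Suc k) (2*j) \<union> dyadic_interval a (Suc k) (2*j + 1)"
    by (auto simp: mem_dyadic_interval_iff)
qed

lemma dyadic_interval_borel [measurable]: "dyadic_interval a k j \<in> sets borel"
  unfolding dyadic_interval_def by simp

lemma dyadic_interval_subset_closed:
  "dyadic_interval a k j \<subseteq> {a + real_of_int j / 2^k .. a + (real_of_int j + 1) / 2^k}"
  unfolding dyadic_interval_def by auto

lemma Inf_dyadic_interval: "Inf (dyadic_interval a k j) = a + real_of_int j / 2^k"
  unfolding dyadic_interval_def by (rule cInf_atLeastLessThan) (simp add: field_simps)

lemma Sup_dyadic_interval: "Sup (dyadic_interval a k j) = a + (real_of_int j + 1) / 2^k"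
  unfolding dyadic_interval_def by (rule cSup_atLeastLessThan) (simp add: field_simps)

lemma T_map_dyadic_interval: "T_map (dyadic_interval a k j) x = (x - a) * 2^k - real_of_int j"
  unfolding T_map_def Inf_dyadic_interval Sup_dyadic_interval by (simp add: field_simps)

lemma measurable_dyadic_index [measurable]: "dyadic_index a k \<in> borel \<rightarrow>\<^sub>M count_space UNIV"
  unfolding dyadic_index_def by measurable

lemma measurable_comp_dyadic_index [measurable]:
  "(\<lambda>x. \<phi> (dyadic_index a k x)) \<in> borel_measurable borel" for \<phi> :: "int \<Rightarrow> 'b::topological_space"
  by (rule measurable_compose[OF measurable_dyadic_index]) simp

lemma inj_dyadic_interval_index: "inj (\<lambda>k. dyadic_interval a k (dyadic_index a k x))"
proof (rule injI)
  fix k k' assume "dyadic_interval a k (dyadic_index a k x) = dyadic_interval a k' (dyadic_index a k' x)"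
  then have "Sup (dyadic_interval a k (dyadic_index a k x)) - Inf (dyadic_interval a k (dyadic_index a k x))
      = Sup (dyadic_interval a k' (dyadic_index a k' x)) - Inf (dyadic_interval a k' (dyadic_index a k' x))"
    by simp
  then have "(2::real)^k = 2^k'"
    unfolding Sup_dyadic_interval Inf_dyadic_interval by (simp add: field_simps)
  then show "k = k'" by (simp add: power_inject_exp)
qed

lemma sum_lessThan_add: "(\<Sum>i<m + n. f i) = (\<Sum>i<m. f i) + (\<Sum>i<n. f (m + i))"
  for f :: "nat \<Rightarrow> 'b::comm_monoid_add"
  by (induction n) (auto simp: add.assoc)

lemma sum_power2_Suc_halves:
  "(\<Sum>i<(2::nat)^Suc n. f i) = (\<Sum>i<(2::nat)^n. f i) + (\<Sum>i<(2::nat)^n. f (2^n + i))"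
  for f :: "nat \<Rightarrow> 'b::comm_monoid_add"
proof -
  have "(2::nat)^Suc n = 2^n + 2^n" by simp
  then show ?thesis by (simp only: sum_lessThan_add)
qed

lemma sum_descendants_Suc:
  "(\<Sum>i<(2::nat)^Suc r. F (2^Suc r * p + int i))
     = (\<Sum>i<(2::nat)^r. F (2^r * (2*p) + int i)) + (\<Sum>i<(2::nat)^r. F (2^r * (2*p + 1) + int i))"
  for F :: "int \<Rightarrow> 'b::comm_monoid_add"
  by (subst sum_power2_Suc_halves) (simp add: algebra_simps)

lemma sum_power2_Suc_windows:
  fixes \<psi> :: "real \<Rightarrow> real" and F :: "int \<Rightarrow> real"
  shows "(\<Sum>i<(2::nat)^Suc n. \<psi> (t + s * real i / 2^Suc n) * F (2^Suc n * p + int i))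
    = (\<Sum>i<(2::nat)^n. \<psi> (t + s/2 * real i / 2^n) * F (2^n * (2*p) + int i))
      + (\<Sum>i<(2::nat)^n. \<psi> (t + s/2 + s/2 * real i / 2^n) * F (2^n * (2*p + 1) + int i))"
proof (subst sum_power2_Suc_halves, intro arg_cong2[where f="(+)"] sum.cong refl)
  fix i
  have "t + s * real (2^n + i) / 2^Suc n = t + s/2 + s/2 * real i / 2^n"
    by (simp add: field_simps)
  moreover have "2^Suc n * p + int (2^n + i) = 2^n * (2*p + 1) + int i"
    by (simp add: algebra_simps)
  ultimately show "\<psi> (t + s * real (2^n + i) / 2^Suc n) * F (2^Suc n * p + int (2^n + i))
      = \<psi> (t + s/2 + s/2 * real i / 2^n) * F (2^n * (2*p + 1) + int i)"
    by (simp only:)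
qed (simp add: algebra_simps)

lemma sum_descendants_additive:
  fixes f :: "nat \<Rightarrow> int \<Rightarrow> 'b::comm_monoid_add"
  assumes additive: "\<And>k j. f k j = f (Suc k) (2*j) + f (Suc k) (2*j + 1)"
  shows "(\<Sum>i<(2::nat)^n. f (k + n) (2^n * j + int i)) = f k j"
proof (induction n arbitrary: k j)
  case 0
  then show ?case by simp
next
  case (Suc n)
  have "(\<Sum>i<(2::nat)^Suc n. f (k + Suc n) (2^Suc n * j + int i))
      = (\<Sum>i<(2::nat)^n. f (Suc k + n) (2^n * (2*j) + int i))
        + (\<Sum>i<(2::nat)^n. f (Suc k + n) (2^n * (2*j + 1) + int i))"
    by (subst sum_descendants_Suc) simp
  also have "\<dots> = f (Suc k) (2*j) + f (Suc k) (2*j + 1)"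
    using Suc.IH[of "Suc k" "2*j"] Suc.IH[of "Suc k" "2*j + 1"] by simp
  finally show ?case by (metis additive)
qed

lemma nn_integral_count_space_even_odd:
  fixes f :: "int \<Rightarrow> ennreal"
  shows "(\<integral>\<^sup>+p. f (2*p) + f (2*p + 1) \<partial>count_space UNIV) = (\<integral>\<^sup>+q. f q \<partial>count_space UNIV)"
proof -
  have "bij_betw (\<lambda>p::int. 2*p) UNIV {q. even q}"
    by (rule bij_betwI[where g="\<lambda>q. q div 2"]) (auto elim!: evenE)
  then have even: "(\<integral>\<^sup>+p. f (2*p) \<partial>count_space UNIV)
      = (\<integral>\<^sup>+q. f q * indicator {q. even q} q \<partial>count_space UNIV)"
    by (subst nn_integral_bij_count_space[of _ _ _ f]) (simp_all add: nn_integral_count_space_indicator)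
  have "bij_betw (\<lambda>p::int. 2*p + 1) UNIV {q. odd q}"
    by (rule bij_betwI[where g="\<lambda>q. (q - 1) div 2"]) (auto elim!: oddE)
  then have odd: "(\<integral>\<^sup>+p. f (2*p + 1) \<partial>count_space UNIV)
      = (\<integral>\<^sup>+q. f q * indicator {q. odd q} q \<partial>count_space UNIV)"
    by (subst nn_integral_bij_count_space[of _ _ _ f]) (simp_all add: nn_integral_count_space_indicator)
  have "(\<integral>\<^sup>+p. f (2*p) + f (2*p + 1) \<partial>count_space UNIV)
      = (\<integral>\<^sup>+p. f (2*p) \<partial>count_space UNIV) + (\<integral>\<^sup>+p. f (2*p + 1) \<partial>count_space UNIV)"
    by (rule nn_integral_add) auto
  also have "\<dots> = (\<integral>\<^sup>+q. f q * indicator {q. even q} q + f q * indicator {q. odd q} q \<partial>count_space UNIV)"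
    unfolding even odd by (rule nn_integral_add[symmetric]) auto
  also have "\<dots> = (\<integral>\<^sup>+q. f q \<partial>count_space UNIV)"
    by (rule nn_integral_cong) (auto simp: indicator_def)
  finally show ?thesis .
qed

lemma nn_integral_count_space_descendants:
  fixes f :: "int \<Rightarrow> ennreal"
  shows "(\<integral>\<^sup>+j. (\<Sum>i<(2::nat)^r. f (2^r * j + int i)) \<partial>count_space UNIV) = (\<integral>\<^sup>+q. f q \<partial>count_space UNIV)"
proof (induction r)
  case 0
  then show ?case by simp
next
  case (Suc r)
  define G where "G j = (\<Sum>i<(2::nat)^r. f (2^r * j + int i))" for j
  have "(\<integral>\<^sup>+j. (\<Sum>i<(2::nat)^Suc r. f (2^Suc r * j + int i)) \<partial>count_space UNIV)
      = (\<integral>\<^sup>+j. G (2*j) + G (2*j + 1) \<partial>count_space UNIV)"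
    unfolding G_def by (subst sum_descendants_Suc) simp
  also have "\<dots> = (\<integral>\<^sup>+j. G j \<partial>count_space UNIV)" by (rule nn_integral_count_space_even_odd)
  finally show ?case unfolding G_def Suc.IH .
qed

lemma suminf_commute_ennreal: "(\<Sum>k. \<Sum>r. f k r) = (\<Sum>r. \<Sum>k. f k r)"
  for f :: "nat \<Rightarrow> nat \<Rightarrow> ennreal"
proof -
  have "(\<Sum>k. \<Sum>r. f k r) = (\<Sum>k. \<integral>\<^sup>+r. f k r \<partial>count_space UNIV)"
    by (simp add: nn_integral_count_space_nat)
  also have "\<dots> = (\<integral>\<^sup>+r. (\<Sum>k. f k r) \<partial>count_space UNIV)"
    by (rule nn_integral_suminf[symmetric]) simp
  also have "\<dots> = (\<Sum>r. \<Sum>k. f k r)" by (simp add: nn_integral_count_space_nat)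
  finally show ?thesis .
qed

lemma nn_integral_split_dyadic_intervals:
  fixes \<rho> :: "real measure" and f :: "real \<Rightarrow> ennreal"
  assumes sets: "sets \<rho> = sets borel" and f: "f \<in> borel_measurable borel"
  shows "(\<integral>\<^sup>+x. f x \<partial>\<rho>)
    = (\<integral>\<^sup>+j. (\<integral>\<^sup>+x. f x * indicator (dyadic_interval a k j) x \<partial>\<rho>) \<partial>count_space UNIV)"
proof -
  have "f x = (\<integral>\<^sup>+j. f x * indicator (dyadic_interval a k j) x \<partial>count_space UNIV)" for x
  proof -
    have "indicator (dyadic_interval a k j) x = (indicator {dyadic_index a k x} j :: ennreal)" for j
      by (auto simp: indicator_def mem_dyadic_interval_iff)
    then show ?thesis by (simp add: nn_integral_indicator_singleton)
  qed
  then have "(\<integral>\<^sup>+x. f x \<partial>\<rho>)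
      = (\<integral>\<^sup>+x. (\<integral>\<^sup>+j. f x * indicator (dyadic_interval a k j) x \<partial>count_space UNIV) \<partial>\<rho>)"
    by simp
  also have "\<dots> = (\<integral>\<^sup>+j. (\<integral>\<^sup>+x. f x * indicator (dyadic_interval a k j) x \<partial>\<rho>) \<partial>count_space UNIV)"
    by (rule nn_integral_count_space_nn_integral) (use f sets in \<open>auto cong: measurable_cong_sets\<close>)
  finally show ?thesis .
qed

lemma nn_integral_dyadic_step_function:
  fixes \<rho> :: "real measure" and \<phi> :: "int \<Rightarrow> ennreal"
  assumes sets: "sets \<rho> = sets borel"
  shows "(\<integral>\<^sup>+x. \<phi> (dyadic_index a k x) \<partial>\<rho>)
    = (\<integral>\<^sup>+j. \<phi> j * emeasure \<rho> (dyadic_interval a k j) \<partial>count_space UNIV)"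
proof -
  have "(\<integral>\<^sup>+x. \<phi> (dyadic_index a k x) * indicator (dyadic_interval a k j) x \<partial>\<rho>)
      = \<phi> j * emeasure \<rho> (dyadic_interval a k j)" for j
  proof -
    have "(\<integral>\<^sup>+x. \<phi> (dyadic_index a k x) * indicator (dyadic_interval a k j) x \<partial>\<rho>)
        = (\<integral>\<^sup>+x. \<phi> j * indicator (dyadic_interval a k j) x \<partial>\<rho>)"
      by (rule nn_integral_cong) (auto simp: indicator_def mem_dyadic_interval_iff)
    also have "\<dots> = \<phi> j * emeasure \<rho> (dyadic_interval a k j)"
      by (rule nn_integral_cmult_indicator) (simp add: sets)
    finally show ?thesis .
  qed
  then show ?thesis
    by (subst nn_integral_split_dyadic_intervals[OF sets, of _ a k]) (auto intro: measurable_compose)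
qed

section \<open>Test functions and blow-ups\<close>

lemma abs_diff_le_if_1_lipschitz:
  "1-lipschitz_on UNIV \<psi> \<Longrightarrow> \<bar>\<psi> x - \<psi> y\<bar> \<le> \<bar>x - y\<bar>" for \<psi> :: "real \<Rightarrow> real"
  using lipschitz_onD[of 1 UNIV \<psi> x y] by (simp add: dist_real_def)

lemma abs_test_function_le:
  fixes \<psi> :: "real \<Rightarrow> real"
  assumes "1-lipschitz_on UNIV \<psi>" "\<forall>x. x \<notin> {0..1} \<longrightarrow> \<psi> x = 0"
  shows "\<bar>\<psi> x\<bar> \<le> 2"
proof (cases "x \<in> {0..1}")
  case True
  have "\<bar>\<psi> x - \<psi> (-1)\<bar> \<le> \<bar>x - (-1)\<bar>" by (rule abs_diff_le_if_1_lipschitz[OF assms(1)])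
  then show ?thesis using True assms(2) by simp
next
  case False
  then show ?thesis using assms(2) by simp
qed

lemma borel_measurable_1_lipschitz:
  "1-lipschitz_on UNIV \<psi> \<Longrightarrow> \<psi> \<in> borel_measurable borel" for \<psi> :: "real \<Rightarrow> real"
  by (rule borel_measurable_continuous_onI, rule lipschitz_on_continuous_on)

lemma integral_scale_measure:
  fixes f :: "'a \<Rightarrow> real"
  assumes "r \<ge> 0"
  shows "integral\<^sup>L (scale_measure (ennreal r) N) f = r * integral\<^sup>L N f"
proof -
  have density: "scale_measure (ennreal r) N = density N (\<lambda>_. ennreal r)"
    by (rule measure_eqI) (auto simp: emeasure_density nn_integral_cmult_indicator)
  show ?thesis
  proof (cases "f \<in> borel_measurable N")
    case True
    then show ?thesis using assms by (simp add: density integral_density)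
  next
    case False
    have "borel_measurable (scale_measure (ennreal r) N) = borel_measurable N"
      by (rule measurable_cong_sets) simp_all
    then have "\<not> integrable (scale_measure (ennreal r) N) f" "\<not> integrable N f"
      using False by auto
    then show ?thesis by (simp add: not_integrable_integral_eq)
  qed
qed

lemma T_map_borel [measurable]: "T_map I \<in> borel_measurable borel"
  unfolding T_map_def by measurable

lemma integral_blowup:
  fixes \<rho> :: "real measure" and f :: "real \<Rightarrow> real"
  assumes sets: "sets \<rho> = sets borel" and "measure \<rho> I \<noteq> 0" and "I \<in> sets borel"
    and [measurable]: "f \<in> borel_measurable borel"
  shows "integral\<^sup>L (blowup \<rho> I) f = (\<integral>x. indicator I x * f (T_map I x) \<partial>\<rho>) / measure \<rho> I"
proof -
  have space: "space \<rho> = UNIV" using sets_eq_imp_space_eq[OF sets] by simp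
  have T: "T_map I \<in> restrict_space \<rho> I \<rightarrow>\<^sub>M borel"
    by (rule measurable_restrict_space1) (simp add: measurable_cong_sets[OF sets refl])
  have "integral\<^sup>L (blowup \<rho> I) f
      = integral\<^sup>L (distr (restrict_space \<rho> I) borel (T_map I)) f / measure \<rho> I"
    unfolding blowup_def using assms(2) by (simp add: integral_scale_measure)
  also have "integral\<^sup>L (distr (restrict_space \<rho> I) borel (T_map I)) f
      = integral\<^sup>L (restrict_space \<rho> I) (\<lambda>x. f (T_map I x))"
    by (rule integral_distr[OF T]) simp
  also have "\<dots> = (\<integral>x. indicator I x * f (T_map I x) \<partial>\<rho>)"
    using assms(3) sets space by (subst integral_restrict_space) auto
  finally show ?thesis .
qed

lemma dyadic_index_descendant:
  assumes "x \<in> dyadic_interval a k j"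
  obtains i :: nat where "i < 2^n" "dyadic_index a (k + n) x = 2^n * j + int i"
proof
  let ?q = "dyadic_index a (k + n) x"
  have "?q div 2^n = j" using assms by (simp add: mem_dyadic_interval_iff dyadic_index_add_div)
  then have "?q = 2^n * j + ?q mod 2^n" by (metis div_mult_mod_eq mult.commute)
  then show "?q = 2^n * j + int (nat (?q mod 2^n))" by simp
  have "?q mod 2^n < 2^n" by simp
  then show "nat (?q mod 2^n) < 2^n" by (simp add: nat_less_iff)
qed

lemma T_map_dyadic_descendant:
  assumes "x \<in> dyadic_interval a (k + n) (2^n * j + int i)"
  shows "real i / 2^n \<le> T_map (dyadic_interval a k j) x"
    and "T_map (dyadic_interval a k j) x < (real i + 1) / 2^n"
proof -
  have "real_of_int (2^n * j + int i) \<le> (x - a) * 2^(k + n)"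
    and "(x - a) * 2^(k + n) < real_of_int (2^n * j + int i) + 1"
    using assms unfolding mem_dyadic_interval_iff dyadic_index_def by linarith+
  then show "real i / 2^n \<le> T_map (dyadic_interval a k j) x"
    and "T_map (dyadic_interval a k j) x < (real i + 1) / 2^n"
    unfolding T_map_dyadic_interval by (simp_all add: power_add field_simps)
qed

lemma abs_test_function_sub_step_function_le:
  fixes \<psi> :: "real \<Rightarrow> real"
  assumes lip: "1-lipschitz_on UNIV \<psi>"
  shows "\<bar>indicator (dyadic_interval a k j) x * \<psi> (T_map (dyadic_interval a k j) x)
      - (\<Sum>i<(2::nat)^n. \<psi> (real i / 2^n) * indicator (dyadic_interval a (k + n) (2^n * j + int i)) x)\<bar>
    \<le> indicator (dyadic_interval a k j) x / 2^n"
proof -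
  define I where "I = dyadic_interval a k j"
  define J where "J i = dyadic_interval a (k + n) (2^n * j + int i)" for i :: nat
  define h where "h = (\<Sum>i<(2::nat)^n. \<psi> (real i / 2^n) * indicator (J i) x)"
  show ?thesis unfolding I_def[symmetric] J_def[symmetric] h_def[symmetric]
  proof (cases "x \<in> I")
    case True
    then obtain i0 :: nat where i0: "i0 < 2^n" "dyadic_index a (k + n) x = 2^n * j + int i0"
      unfolding I_def by (rule dyadic_index_descendant)
    then have "x \<in> J i \<longleftrightarrow> i = i0" for i by (auto simp: J_def mem_dyadic_interval_iff)
    then have "h = \<psi> (real i0 / 2^n)"
      using i0(1) by (simp add: h_def indicator_def sum.delta if_distrib cong: if_cong)
    moreover have "\<bar>T_map I x - real i0 / 2^n\<bar> \<le> 1 / 2^n"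
      using T_map_dyadic_descendant[of x a k n j i0] i0(2)
      by (simp add: I_def mem_dyadic_interval_iff add_divide_distrib)
    ultimately show "\<bar>indicator I x * \<psi> (T_map I x) - h\<bar> \<le> indicator I x / 2^n"
      using True abs_diff_le_if_1_lipschitz[OF lip, of "T_map I x" "real i0 / 2^n"] by simp
  next
    case False
    have "J i \<subseteq> I" if "i < 2^n" for i
      using that unfolding J_def I_def by (intro dyadic_interval_descendant) (simp_all add: of_nat_less_iff)
    with False have "x \<notin> J i" if "i < 2^n" for i using that by blast
    then have "h = 0" unfolding h_def by (intro sum.neutral) auto
    then show "\<bar>indicator I x * \<psi> (T_map I x) - h\<bar> \<le> indicator I x / 2^n" using False by simp
  qed
qed

lemma integral_test_function_discretization:
  fixes \<rho> :: "real measure" and \<psi> :: "real \<Rightarrow> real"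
  assumes sets: "sets \<rho> = sets borel" and fin: "emeasure \<rho> (dyadic_interval a k j) < \<infinity>"
    and lip: "1-lipschitz_on UNIV \<psi>" and bounded: "\<And>x. \<bar>\<psi> x\<bar> \<le> 2"
  shows "\<bar>(\<integral>x. indicator (dyadic_interval a k j) x * \<psi> (T_map (dyadic_interval a k j) x) \<partial>\<rho>)
      - (\<Sum>i<(2::nat)^n. \<psi> (real i / 2^n) * measure \<rho> (dyadic_interval a (k + n) (2^n * j + int i)))\<bar>
    \<le> measure \<rho> (dyadic_interval a k j) / 2^n"
proof -
  define I where "I = dyadic_interval a k j"
  define J where "J i = dyadic_interval a (k + n) (2^n * j + int i)" for i :: nat
  define u where "u x = indicator I x * \<psi> (T_map I x)" for x
  define h where "h x = (\<Sum>i<(2::nat)^n. \<psi> (real i / 2^n) * indicator (J i) x)" for x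
  have [measurable]: "\<psi> \<in> borel_measurable borel" by (rule borel_measurable_1_lipschitz[OF lip])
  have space: "space \<rho> = UNIV" using sets_eq_imp_space_eq[OF sets] by simp
  have sets_I: "I \<in> sets \<rho>" and sets_J: "J i \<in> sets \<rho>" for i
    using sets by (simp_all add: I_def J_def)
  have J_I: "J i \<subseteq> I" if "i < 2^n" for i
    using that unfolding J_def I_def by (intro dyadic_interval_descendant) (simp_all add: of_nat_less_iff)
  have fin_J: "emeasure \<rho> (J i) < \<infinity>" if "i < 2^n" for i
    using emeasure_mono[OF J_I[OF that] sets_I] fin unfolding I_def by simp
  have int_I: "integrable \<rho> (\<lambda>x. c * indicator I x)" for c :: real
    using fin sets_I unfolding I_def by (intro integrable_mult_right integrable_real_indicator) auto
  have int_u: "integrable \<rho> u"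
  proof (rule Bochner_Integration.integrable_bound[OF int_I[of 2]])
    show "u \<in> borel_measurable \<rho>"
      unfolding measurable_cong_sets[OF sets refl] u_def I_def by measurable
    show "AE x in \<rho>. norm (u x) \<le> norm (2 * indicator I x :: real)"
      using bounded by (auto simp: u_def indicator_def)
  qed
  have int_h: "integrable \<rho> h" unfolding h_def
    by (intro Bochner_Integration.integrable_sum integrable_mult_right integrable_real_indicator sets_J fin_J)
      auto
  have approx: "\<bar>u x - h x\<bar> \<le> indicator I x / 2^n" for x
    unfolding u_def h_def I_def J_def by (rule abs_test_function_sub_step_function_le[OF lip])
  have "\<bar>integral\<^sup>L \<rho> u - integral\<^sup>L \<rho> h\<bar> = \<bar>\<integral>x. u x - h x \<partial>\<rho>\<bar>"
    using int_u int_h by simp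
  also have "\<dots> \<le> (\<integral>x. indicator I x / 2^n \<partial>\<rho>)"
    using int_u int_h int_I[of "1 / 2^n"] approx by (intro integral_abs_bound_integral) auto
  also have "\<dots> = measure \<rho> I / 2^n" using space by simp
  finally have "\<bar>integral\<^sup>L \<rho> u - integral\<^sup>L \<rho> h\<bar> \<le> measure \<rho> I / 2^n" .
  moreover have "integral\<^sup>L \<rho> h = (\<Sum>i<(2::nat)^n. \<psi> (real i / 2^n) * measure \<rho> (J i))"
    unfolding h_def using sets_J fin_J space
    by (subst Bochner_Integration.integral_sum) (auto intro!: integrable_mult_right integrable_real_indicator)
  ultimately show ?thesis unfolding u_def I_def J_def by simp
qed

lemma abs_sum_recentre_le:
  fixes \<psi> :: "real \<Rightarrow> real"
  assumes lip: "1-lipschitz_on UNIV \<psi>"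
    and P: "\<And>i. i < N \<Longrightarrow> t \<le> P i \<and> P i \<le> t + s" and v: "\<And>i. v i \<ge> 0"
  shows "\<bar>(\<Sum>i<N. \<psi> (P i) * (m i - c * v i)) - (\<Sum>i<N. \<psi> (P i) * (m i - c' * v i))
           - (c' - c) * \<psi> t * (\<Sum>i<N. v i)\<bar>
         \<le> s * \<bar>c' - c\<bar> * (\<Sum>i<N. v i)"
proof -
  have "(\<Sum>i<N. \<psi> (P i) * (m i - c * v i)) - (\<Sum>i<N. \<psi> (P i) * (m i - c' * v i))
      - (c' - c) * \<psi> t * (\<Sum>i<N. v i) = (c' - c) * (\<Sum>i<N. (\<psi> (P i) - \<psi> t) * v i)"
    by (simp add: sum_distrib_left sum_subtractf[symmetric] algebra_simps)
  also have "\<bar>\<dots>\<bar> \<le> \<bar>c' - c\<bar> * (\<Sum>i<N. s * v i)"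
    unfolding abs_mult
  proof (intro mult_left_mono order.trans[OF sum_abs] sum_mono)
    fix i assume "i \<in> {..<N}"
    then have "\<bar>\<psi> (P i) - \<psi> t\<bar> \<le> s"
      using abs_diff_le_if_1_lipschitz[OF lip, of "P i" t] P[of i] by auto
    then show "\<bar>(\<psi> (P i) - \<psi> t) * v i\<bar> \<le> s * v i"
      using v[of i] by (simp add: abs_mult mult_right_mono)
  qed simp
  finally show ?thesis by (simp add: sum_distrib_left mult_ac)
qed

lemma W1_bounds:
  assumes "\<And>\<psi>. 1-lipschitz_on UNIV \<psi> \<Longrightarrow> \<forall>x. x \<notin> {0..1} \<longrightarrow> \<psi> x = 0 \<Longrightarrow>
      \<bar>(\<integral>x. \<psi> x \<partial>M1) - (\<integral>x. \<psi> x \<partial>M2)\<bar> \<le> B"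
  shows "0 \<le> W1 M1 M2" and "W1 M1 M2 \<le> B"
proof -
  let ?G = "{\<bar>(\<integral>x. \<psi> x \<partial>M1) - (\<integral>x. \<psi> x \<partial>M2)\<bar> | \<psi>.
      1-lipschitz_on UNIV \<psi> \<and> (\<forall>x. x \<notin> {0..1} \<longrightarrow> \<psi> x = 0)} :: real set"
  have "1-lipschitz_on UNIV (\<lambda>_::real. 0::real)" by (rule lipschitz_onI) auto
  then have zero: "0 \<in> ?G" by (auto intro!: exI[of _ "\<lambda>_. 0"])
  have bound: "\<And>w. w \<in> ?G \<Longrightarrow> w \<le> B" using assms by blast
  show "0 \<le> W1 M1 M2"
    unfolding W1_def using bound by (intro cSup_upper2[OF zero order.refl] bdd_aboveI) blast
  show "W1 M1 M2 \<le> B"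
    unfolding W1_def using zero bound by (intro cSup_least) auto
qed

locale dyadic_L2_density =
  fixes a :: real and \<nu> :: "real measure" and g :: "real \<Rightarrow> real"
  assumes sets_\<nu>: "sets \<nu> = sets borel"
    and compact_finite: "\<And>K. compact K \<Longrightarrow> emeasure \<nu> K < \<infinity>"
    and g_measurable [measurable]: "g \<in> borel_measurable \<nu>"
    and g_nonneg: "\<And>x. g x \<ge> 0"
    and g_square_integrable: "integrable \<nu> (\<lambda>x. (g x)^2)"
begin

abbreviation "\<mu> \<equiv> density \<nu> (\<lambda>x. ennreal (g x))"

lemma sets_\<mu>: "sets \<mu> = sets borel"
  by (simp add: sets_\<nu>)

lemma measurable_\<nu>: "measurable \<nu> N = measurable borel N"
  by (rule measurable_cong_sets[OF sets_\<nu> refl])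

lemma measurable_\<mu>: "measurable \<mu> N = measurable borel N"
  by (rule measurable_cong_sets[OF sets_\<mu> refl])

lemma g_borel [measurable]: "g \<in> borel_measurable borel"
  using g_measurable unfolding measurable_\<nu> .

lemma nn_integral_g_square_finite: "(\<integral>\<^sup>+x. ennreal ((g x)^2) \<partial>\<nu>) < \<infinity>"
  using g_square_integrable by (simp add: integrable_iff_bounded)

lemma emeasure_\<mu>: "A \<in> sets borel \<Longrightarrow> emeasure \<mu> A = (\<integral>\<^sup>+x. ennreal (g x) * indicator A x \<partial>\<nu>)"
  by (subst emeasure_density) (auto simp: sets_\<nu>)

lemma emeasure_\<nu>_dyadic_interval_finite: "emeasure \<nu> (dyadic_interval a k j) < \<infinity>"
proof -
  have "emeasure \<nu> (dyadic_interval a k j)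
      \<le> emeasure \<nu> {a + real_of_int j / 2^k .. a + (real_of_int j + 1) / 2^k}"
    by (rule emeasure_mono[OF dyadic_interval_subset_closed]) (simp add: sets_\<nu>)
  also have "\<dots> < \<infinity>" by (rule compact_finite) simp
  finally show ?thesis .
qed

lemma emeasure_\<mu>_finite_if_\<nu>_finite:
  assumes A: "A \<in> sets borel" "emeasure \<nu> A < \<infinity>"
  shows "emeasure \<mu> A < \<infinity>"
proof -
  have "emeasure \<mu> A \<le> (\<integral>\<^sup>+x. indicator A x + ennreal ((g x)^2) \<partial>\<nu>)"
    unfolding emeasure_\<mu>[OF A(1)]
  proof (rule nn_integral_mono)
    fix x
    have "0 \<le> (g x - 1/2)^2" by simp
    then have "g x \<le> 1 + (g x)^2" by (simp add: power2_eq_square algebra_simps)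
    then have "ennreal (g x) \<le> ennreal (1 + (g x)^2)" by (rule ennreal_leI)
    then show "ennreal (g x) * indicator A x \<le> indicator A x + ennreal ((g x)^2)"
      by (cases "x \<in> A") auto
  qed
  also have "\<dots> = emeasure \<nu> A + (\<integral>\<^sup>+x. ennreal ((g x)^2) \<partial>\<nu>)"
    using A by (subst nn_integral_add) (simp_all add: measurable_\<nu> sets_\<nu>)
  also have "\<dots> < \<infinity>" using A nn_integral_g_square_finite by (simp add: ennreal_add_less_top)
  finally show ?thesis .
qed

definition mu_mass :: "nat \<Rightarrow> int \<Rightarrow> real" where
  "mu_mass k j = measure \<mu> (dyadic_interval a k j)"

definition nu_mass :: "nat \<Rightarrow> int \<Rightarrow> real" where
  "nu_mass k j = measure \<nu> (dyadic_interval a k j)"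

definition avg :: "nat \<Rightarrow> int \<Rightarrow> real" where
  "avg k j = mu_mass k j / nu_mass k j"

lemma mu_mass_nonneg: "mu_mass k j \<ge> 0"
  unfolding mu_mass_def by simp

lemma nu_mass_nonneg: "nu_mass k j \<ge> 0"
  unfolding nu_mass_def by simp

lemma avg_nonneg: "avg k j \<ge> 0"
  unfolding avg_def using mu_mass_nonneg nu_mass_nonneg by simp

lemma emeasure_\<mu>_dyadic_interval_finite: "emeasure \<mu> (dyadic_interval a k j) < \<infinity>"
  by (rule emeasure_\<mu>_finite_if_\<nu>_finite[OF dyadic_interval_borel emeasure_\<nu>_dyadic_interval_finite])

lemma emeasure_\<mu>_dyadic_interval: "emeasure \<mu> (dyadic_interval a k j) = ennreal (mu_mass k j)"
  unfolding mu_mass_def using emeasure_\<mu>_dyadic_interval_finite[of k j]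
  by (intro emeasure_eq_ennreal_measure) simp

lemma emeasure_\<nu>_dyadic_interval: "emeasure \<nu> (dyadic_interval a k j) = ennreal (nu_mass k j)"
  unfolding nu_mass_def using emeasure_\<nu>_dyadic_interval_finite[of k j]
  by (intro emeasure_eq_ennreal_measure) simp

lemma measure_dyadic_interval_children:
  assumes "sets N = sets borel" "emeasure N (dyadic_interval a k j) < \<infinity>"
  shows "measure N (dyadic_interval a k j)
    = measure N (dyadic_interval a (Suc k) (2*j)) + measure N (dyadic_interval a (Suc k) (2*j + 1))"
proof -
  have fin: "emeasure N (dyadic_interval a (Suc k) i) < \<infinity>" if "i = 2*j \<or> i = 2*j + 1" for i
  proof -
    have "emeasure N (dyadic_interval a (Suc k) i) \<le> emeasure N (dyadic_interval a k j)"
      using that assms(1) dyadic_interval_children[of a k j] by (intro emeasure_mono) auto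
    then show ?thesis using assms(2) by simp
  qed
  have "dyadic_interval a (Suc k) (2*j) \<inter> dyadic_interval a (Suc k) (2*j + 1) = {}"
    by (auto simp: mem_dyadic_interval_iff)
  then show ?thesis
    using fin[of "2*j"] fin[of "2*j + 1"] assms(1)
    by (subst dyadic_interval_children) (auto simp: fmeasurable_def intro!: measure_Union)
qed

lemma mu_mass_children: "mu_mass k j = mu_mass (Suc k) (2*j) + mu_mass (Suc k) (2*j + 1)"
  unfolding mu_mass_def
  by (rule measure_dyadic_interval_children[OF sets_\<mu> emeasure_\<mu>_dyadic_interval_finite])

lemma nu_mass_children: "nu_mass k j = nu_mass (Suc k) (2*j) + nu_mass (Suc k) (2*j + 1)"
  unfolding nu_mass_def by (rule measure_dyadic_interval_children[OF sets_\<nu> emeasure_\<nu>_dyadic_interval_finite])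

lemma nu_mass_descendants: "(\<Sum>i<(2::nat)^n. nu_mass (k + n) (2^n * j + int i)) = nu_mass k j"
  by (rule sum_descendants_additive) (rule nu_mass_children)

lemma mu_mass_eq_0_if_nu_mass_eq_0:
  assumes "nu_mass k j = 0" shows "mu_mass k j = 0"
proof -
  have "dyadic_interval a k j \<in> null_sets \<nu>"
    using assms emeasure_\<nu>_dyadic_interval[of k j] by (simp add: null_sets_def sets_\<nu>)
  then have "emeasure \<mu> (dyadic_interval a k j) = 0"
    by (simp add: emeasure_\<mu> nn_integral_null_set)
  then show ?thesis using mu_mass_nonneg[of k j] by (simp add: emeasure_\<mu>_dyadic_interval)
qed

lemma nu_mass_pos_if_mu_mass_pos: "mu_mass k j > 0 \<Longrightarrow> nu_mass k j > 0"
  using nu_mass_nonneg[of k j] mu_mass_eq_0_if_nu_mass_eq_0[of k j] by fastforce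

lemma mu_mass_eq_avg_nu_mass: "mu_mass k j = avg k j * nu_mass k j"
  unfolding avg_def using mu_mass_eq_0_if_nu_mass_eq_0[of k j] by (cases "nu_mass k j = 0") auto

end

section \<open>The blow-up coefficients are controlled by mass defects\<close>

context dyadic_L2_density
begin

definition mass_defect :: "nat \<Rightarrow> int \<Rightarrow> real" where
  "mass_defect l p =
     \<bar>mu_mass (Suc l) (2*p) - avg l p * nu_mass (Suc l) (2*p)\<bar>
   + \<bar>mu_mass (Suc l) (2*p + 1) - avg l p * nu_mass (Suc l) (2*p + 1)\<bar>"

definition defect_series :: "real \<Rightarrow> nat \<Rightarrow> int \<Rightarrow> nat \<Rightarrow> real" where
  "defect_series s l p n = (\<Sum>r<n. s / 2^r * (\<Sum>i<(2::nat)^r. mass_defect (l + r) (2^r * p + int i)))"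

lemma defect_series_Suc:
  "defect_series s l p (Suc n)
     = s * mass_defect l p + defect_series (s/2) (Suc l) (2*p) n + defect_series (s/2) (Suc l) (2*p + 1) n"
proof -
  have "defect_series s l p (Suc n) = s * mass_defect l p
      + (\<Sum>r<n. s / 2^Suc r * (\<Sum>i<(2::nat)^Suc r. mass_defect (l + Suc r) (2^Suc r * p + int i)))"
    unfolding defect_series_def by (subst sum.lessThan_Suc_shift) simp
  also have "(\<Sum>r<n. s / 2^Suc r * (\<Sum>i<(2::nat)^Suc r. mass_defect (l + Suc r) (2^Suc r * p + int i)))
      = defect_series (s/2) (Suc l) (2*p) n + defect_series (s/2) (Suc l) (2*p + 1) n"
    unfolding defect_series_def sum.distrib[symmetric]
    by (rule sum.cong[OF refl], subst sum_descendants_Suc) (simp add: algebra_simps)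
  finally show ?thesis by simp
qed

lemma abs_diff_avg_nu_mass: "\<bar>mu_mass k j - c * nu_mass k j\<bar> = \<bar>avg k j - c\<bar> * nu_mass k j"
  using nu_mass_nonneg[of k j]
  by (simp add: mu_mass_eq_avg_nu_mass[of k j] abs_mult left_diff_distrib[symmetric])

text \<open>Summation by parts down the dyadic tree: at each vertex the average changes from \<open>avg l p\<close> to
  the averages of the children, and since \<open>\<psi>\<close> varies by at most \<open>s\<close> on the current window the error
  is \<open>s\<close> times the mass defect of the vertex.\<close>

lemma abs_sum_test_values_le_defect_series:
  fixes \<psi> :: "real \<Rightarrow> real"
  assumes lip: "1-lipschitz_on UNIV \<psi>"
  shows "s \<ge> 0 \<Longrightarrow> \<bar>\<Sum>i<(2::nat)^n. \<psi> (t + s * real i / 2^n) *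
      (mu_mass (l + n) (2^n * p + int i) - avg l p * nu_mass (l + n) (2^n * p + int i))\<bar>
    \<le> defect_series s l p n"
proof (induction n arbitrary: l p t s)
  case 0
  then show ?case by (simp add: defect_series_def mu_mass_eq_avg_nu_mass[symmetric])
next
  case (Suc n)
  let ?N = "(2::nat)^n"
  define cc where "cc = avg l p"
  define S where "S q u c = (\<Sum>i<?N. \<psi> (u + s/2 * real i / 2^n) *
      (mu_mass (Suc l + n) (2^n * q + int i) - c * nu_mass (Suc l + n) (2^n * q + int i)))" for q u c
  have split: "(\<Sum>i<(2::nat)^Suc n. \<psi> (t + s * real i / 2^Suc n) *
      (mu_mass (l + Suc n) (2^Suc n * p + int i) - cc * nu_mass (l + Suc n) (2^Suc n * p + int i)))
    = S (2*p) t cc + S (2*p + 1) (t + s/2) cc"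
    unfolding S_def using sum_power2_Suc_windows[where F="\<lambda>q. mu_mass (l + Suc n) q - cc * nu_mass (l + Suc n) q"]
    by simp
  have IH: "\<bar>S q u (avg (Suc l) q)\<bar> \<le> defect_series (s/2) (Suc l) q n" for q u
    unfolding S_def using Suc.IH[of "s/2" u "Suc l" q] Suc.prems by (simp add: mult_ac)
  define R where "R q = (avg (Suc l) q - cc) * \<psi> t * nu_mass (Suc l) q" for q
  have recentre: "\<bar>S q u cc - S q u (avg (Suc l) q) - R q\<bar>
      \<le> s * \<bar>mu_mass (Suc l) q - cc * nu_mass (Suc l) q\<bar>"
    if "t \<le> u" "u \<le> t + s/2" for q u
  proof -
    have "\<bar>S q u cc - S q u (avg (Suc l) q) - (avg (Suc l) q - cc) * \<psi> t * nu_mass (Suc l) q\<bar>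
        \<le> s * \<bar>avg (Suc l) q - cc\<bar> * nu_mass (Suc l) q"
      unfolding S_def nu_mass_descendants[where n=n and k="Suc l" and j=q, symmetric]
    proof (rule abs_sum_recentre_le[OF lip])
      fix i assume "i < ?N"
      then have "real i / 2^n \<le> 1" by (simp add: field_simps)
      then have "s/2 * (real i / 2^n) \<le> s/2" using Suc.prems by (intro mult_left_le) auto
      then have "s/2 * real i / 2^n \<le> s/2" by simp
      moreover have "0 \<le> s/2 * real i / 2^n" using Suc.prems by simp
      ultimately show "t \<le> u + s/2 * real i / 2^n \<and> u + s/2 * real i / 2^n \<le> t + s"
        using that by linarith
    qed (rule nu_mass_nonneg)
    then show ?thesis by (simp add: R_def abs_diff_avg_nu_mass mult_ac)
  qed
  have balance: "(avg (Suc l) (2*p) - cc) * nu_mass (Suc l) (2*p)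
      + (avg (Suc l) (2*p + 1) - cc) * nu_mass (Suc l) (2*p + 1) = 0"
    using mu_mass_children[of l p] nu_mass_children[of l p] mu_mass_eq_avg_nu_mass[of l p]
      mu_mass_eq_avg_nu_mass[of "Suc l" "2*p"] mu_mass_eq_avg_nu_mass[of "Suc l" "2*p + 1"]
    unfolding cc_def by (simp add: algebra_simps)
  have "R (2*p) + R (2*p + 1) = \<psi> t * ((avg (Suc l) (2*p) - cc) * nu_mass (Suc l) (2*p)
      + (avg (Suc l) (2*p + 1) - cc) * nu_mass (Suc l) (2*p + 1))"
    unfolding R_def by (simp add: algebra_simps)
  with balance have cancel: "R (2*p) + R (2*p + 1) = 0" by simp
  have "\<bar>S (2*p) t cc + S (2*p + 1) (t + s/2) cc\<bar>
      \<le> \<bar>S (2*p) t (avg (Suc l) (2*p))\<bar> + \<bar>S (2*p + 1) (t + s/2) (avg (Suc l) (2*p + 1))\<bar>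
        + s * mass_defect l p"
    using recentre[of t "2*p"] recentre[of "t + s/2" "2*p + 1"] Suc.prems cancel
    unfolding mass_defect_def cc_def[symmetric] distrib_left by linarith
  also have "\<dots> \<le> defect_series s l p (Suc n)"
    using IH[of "2*p" t] IH[of "2*p + 1" "t + s/2"] by (simp add: defect_series_Suc)
  finally show ?case using split unfolding cc_def by simp
qed

lemma abs_blowup_integral_diff_le:
  fixes \<psi> :: "real \<Rightarrow> real"
  assumes pos: "mu_mass k j > 0"
    and lip: "1-lipschitz_on UNIV \<psi>" and supp: "\<forall>x. x \<notin> {0..1} \<longrightarrow> \<psi> x = 0"
  shows "\<bar>(\<integral>x. \<psi> x \<partial>blowup \<mu> (dyadic_interval a k j)) - (\<integral>x. \<psi> x \<partial>blowup \<nu> (dyadic_interval a k j))\<bar>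
    \<le> 2 / 2^n + defect_series 1 k j n / mu_mass k j"
proof -
  let ?I = "dyadic_interval a k j"
  have pos': "nu_mass k j > 0" by (rule nu_mass_pos_if_mu_mass_pos[OF pos])
  have [measurable]: "\<psi> \<in> borel_measurable borel" by (rule borel_measurable_1_lipschitz[OF lip])
  have bounded: "\<bar>\<psi> x\<bar> \<le> 2" for x by (rule abs_test_function_le[OF lip supp])
  define U1 where "U1 = (\<integral>x. indicator ?I x * \<psi> (T_map ?I x) \<partial>\<mu>)"
  define U2 where "U2 = (\<integral>x. indicator ?I x * \<psi> (T_map ?I x) \<partial>\<nu>)"
  define A where "A = (\<Sum>i<(2::nat)^n. \<psi> (real i / 2^n) * mu_mass (k + n) (2^n * j + int i))"
  define B where "B = (\<Sum>i<(2::nat)^n. \<psi> (real i / 2^n) * nu_mass (k + n) (2^n * j + int i))"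
  have blowup_\<mu>: "(\<integral>x. \<psi> x \<partial>blowup \<mu> ?I) = U1 / mu_mass k j"
    unfolding U1_def using pos by (subst integral_blowup) (auto simp: sets_\<nu> mu_mass_def)
  have blowup_\<nu>: "(\<integral>x. \<psi> x \<partial>blowup \<nu> ?I) = U2 / nu_mass k j"
    unfolding U2_def using pos' by (subst integral_blowup) (auto simp: sets_\<nu> nu_mass_def)
  have discrete_\<mu>: "\<bar>U1 - A\<bar> \<le> mu_mass k j / 2^n"
    using integral_test_function_discretization[OF sets_\<mu> emeasure_\<mu>_dyadic_interval_finite lip bounded]
    unfolding U1_def A_def mu_mass_def .
  have discrete_\<nu>: "\<bar>B - U2\<bar> \<le> nu_mass k j / 2^n"
    using integral_test_function_discretization[OF sets_\<nu> emeasure_\<nu>_dyadic_interval_finite lip bounded]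
    unfolding U2_def B_def nu_mass_def by (simp add: abs_minus_commute)
  have tree: "\<bar>A - avg k j * B\<bar> \<le> defect_series 1 k j n"
    using abs_sum_test_values_le_defect_series[OF lip, where s=1 and t=0 and l=k and p=j and n=n]
    unfolding A_def B_def by (simp add: sum_distrib_left sum_subtractf[symmetric] algebra_simps)
  have "U1 / mu_mass k j - U2 / nu_mass k j
      = (U1 - A) / mu_mass k j + (A - avg k j * B) / mu_mass k j + (B - U2) / nu_mass k j"
    using pos pos' unfolding avg_def by (simp add: field_simps)
  also have "\<bar>\<dots>\<bar> \<le> \<bar>U1 - A\<bar> / mu_mass k j + \<bar>A - avg k j * B\<bar> / mu_mass k j + \<bar>B - U2\<bar> / nu_mass k j"
  proof -
    have "\<bar>x + y + z\<bar> \<le> \<bar>x\<bar> + \<bar>y\<bar> + \<bar>z\<bar>" for x y z :: real by linarith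
    from this[of "(U1 - A) / mu_mass k j" "(A - avg k j * B) / mu_mass k j" "(B - U2) / nu_mass k j"]
    show ?thesis using pos pos' by (simp add: abs_divide)
  qed
  also have "\<dots> \<le> (mu_mass k j / 2^n) / mu_mass k j + defect_series 1 k j n / mu_mass k j
      + (nu_mass k j / 2^n) / nu_mass k j"
    using discrete_\<mu> discrete_\<nu> tree pos pos' by (intro add_mono divide_right_mono) auto
  also have "\<dots> = 2 / 2^n + defect_series 1 k j n / mu_mass k j"
    using pos pos' by (simp add: field_simps)
  finally show ?thesis unfolding blowup_\<mu> blowup_\<nu> .
qed

lemma alpha_nonneg_and_mass_bound:
  assumes "mu_mass k j > 0"
  shows "0 \<le> alpha \<mu> \<nu> (dyadic_interval a k j)"
    and "alpha \<mu> \<nu> (dyadic_interval a k j) * mu_mass k j \<le> 2 * mu_mass k j / 2^n + defect_series 1 k j n"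
proof -
  note W1 = W1_bounds[OF abs_blowup_integral_diff_le[OF assms]]
  show "0 \<le> alpha \<mu> \<nu> (dyadic_interval a k j)"
    unfolding alpha_def by (rule W1(1))
  have "alpha \<mu> \<nu> (dyadic_interval a k j) * mu_mass k j
      \<le> (2 / 2^n + defect_series 1 k j n / mu_mass k j) * mu_mass k j"
    unfolding alpha_def using assms by (intro mult_right_mono W1(2)) auto
  also have "\<dots> = 2 * mu_mass k j / 2^n + defect_series 1 k j n"
    using assms by (simp add: field_simps)
  finally show "alpha \<mu> \<nu> (dyadic_interval a k j) * mu_mass k j \<le> 2 * mu_mass k j / 2^n + defect_series 1 k j n" .
qed

end

section \<open>Martingale energy\<close>

lemma le_of_forall_le_add_div_power2:
  fixes X Z C :: real
  assumes "\<And>n::nat. X \<le> Z + C / 2^n"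
  shows "X \<le> Z"
proof (rule ccontr)
  assume "\<not> X \<le> Z"
  then have "X - Z > 0" by simp
  obtain n :: nat where "C / (X - Z) < 2^n" using real_arch_pow[of 2 "C / (X - Z)"] by auto
  with \<open>X - Z > 0\<close> have "C / 2^n < X - Z" by (simp add: field_simps)
  with assms[of n] show False by simp
qed

lemma square_le_if_forall_le_AM_GM:
  fixes X V t :: real
  assumes "X \<ge> 0" "V > 0" "t \<ge> 0" and H: "\<And>l. l > 0 \<Longrightarrow> X \<le> l * V + t / (2 * l)"
  shows "X^2 \<le> 2 * V * t"
proof (cases "X = 0")
  case True
  then show ?thesis using assms by simp
next
  case False
  with assms have "X > 0" by simp
  have "X \<le> (X / (2*V)) * V + t / (2 * (X / (2*V)))"
    using \<open>X > 0\<close> \<open>V > 0\<close> by (intro H) simp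
  also have "\<dots> = X/2 + t * V / X" using \<open>X > 0\<close> \<open>V > 0\<close> by (simp add: field_simps)
  finally have "X * X \<le> 2 * V * t" using \<open>X > 0\<close> by (simp add: field_simps)
  then show ?thesis by (simp add: power2_eq_square)
qed

lemma sum_inverse_power2_le_2: "(\<Sum>r<n. 1 / (2::real)^r) \<le> 2"
proof -
  have "(\<Sum>r<n. 1 / (2::real)^r) = (\<Sum>r<n. (1/2::real)^r)" by (simp add: power_one_over)
  also have "\<dots> = (1 - (1/2)^n) / (1 - 1/2)" by (subst sum_gp_strict) simp
  also have "\<dots> \<le> 2" by simp
  finally show ?thesis .
qed

context dyadic_L2_density
begin

definition energy :: "nat \<Rightarrow> int \<Rightarrow> real" where
  "energy l p = nu_mass (Suc l) (2*p) * (avg (Suc l) (2*p) - avg l p)^2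
    + nu_mass (Suc l) (2*p + 1) * (avg (Suc l) (2*p + 1) - avg l p)^2"

lemma energy_nonneg: "energy l p \<ge> 0"
  unfolding energy_def using nu_mass_nonneg by (intro add_nonneg_nonneg mult_nonneg_nonneg) auto

lemma mu_mass_square_div_nu_mass: "(mu_mass l p)^2 / nu_mass l p = (avg l p)^2 * nu_mass l p"
  unfolding avg_def using mu_mass_eq_0_if_nu_mass_eq_0[of l p]
  by (cases "nu_mass l p = 0") (auto simp: power2_eq_square field_simps)

text \<open>Pythagoras for the dyadic martingale of averages.\<close>

lemma energy_identity:
  "energy l p + (mu_mass l p)^2 / nu_mass l p
    = (mu_mass (Suc l) (2*p))^2 / nu_mass (Suc l) (2*p)
      + (mu_mass (Suc l) (2*p + 1))^2 / nu_mass (Suc l) (2*p + 1)"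
proof -
  define V0 V1 c0 c1 c where "V0 = nu_mass (Suc l) (2*p)" and "V1 = nu_mass (Suc l) (2*p + 1)"
    and "c0 = avg (Suc l) (2*p)" and "c1 = avg (Suc l) (2*p + 1)" and "c = avg l p"
  have V: "nu_mass l p = V0 + V1" unfolding V0_def V1_def by (rule nu_mass_children)
  have M: "c * nu_mass l p = c0 * V0 + c1 * V1"
    unfolding c_def c0_def c1_def V0_def V1_def mu_mass_eq_avg_nu_mass[symmetric]
    by (rule mu_mass_children)
  have "energy l p + (mu_mass l p)^2 / nu_mass l p = V0 * (c0 - c)^2 + V1 * (c1 - c)^2 + c^2 * nu_mass l p"
    unfolding energy_def mu_mass_square_div_nu_mass V0_def V1_def c0_def c1_def c_def ..
  also have "\<dots> = V0 * c0^2 + V1 * c1^2 - 2 * c * (c0 * V0 + c1 * V1) + c^2 * (V0 + V1) + c^2 * nu_mass l p"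
    by (simp add: power2_eq_square algebra_simps)
  also have "\<dots> = V0 * c0^2 + V1 * c1^2"
    unfolding M[symmetric] V[symmetric] by (simp add: power2_eq_square algebra_simps)
  finally show ?thesis
    unfolding mu_mass_square_div_nu_mass V0_def V1_def c0_def c1_def by (simp add: algebra_simps)
qed

lemma mass_defect_square_le: "(mass_defect l p)^2 \<le> nu_mass l p * energy l p"
proof -
  define V0 V1 x0 x1 where "V0 = nu_mass (Suc l) (2*p)" and "V1 = nu_mass (Suc l) (2*p + 1)"
    and "x0 = \<bar>avg (Suc l) (2*p) - avg l p\<bar>" and "x1 = \<bar>avg (Suc l) (2*p + 1) - avg l p\<bar>"
  have "V0 \<ge> 0" "V1 \<ge> 0" unfolding V0_def V1_def by (simp_all add: nu_mass_nonneg)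
  have defect: "mass_defect l p = V0 * x0 + V1 * x1"
    unfolding mass_defect_def abs_diff_avg_nu_mass V0_def V1_def x0_def x1_def by simp
  have energy: "energy l p = V0 * x0^2 + V1 * x1^2"
    unfolding energy_def V0_def V1_def x0_def x1_def by simp
  have mass: "nu_mass l p = V0 + V1" unfolding V0_def V1_def by (rule nu_mass_children)
  have "(V0 + V1) * (V0 * x0^2 + V1 * x1^2) - (V0 * x0 + V1 * x1)^2 = V0 * V1 * (x0 - x1)^2"
    by (simp add: power2_eq_square algebra_simps)
  moreover have "V0 * V1 * (x0 - x1)^2 \<ge> 0" using \<open>V0 \<ge> 0\<close> \<open>V1 \<ge> 0\<close> by simp
  ultimately show ?thesis unfolding defect energy mass by linarith
qed

lemma mass_defect_le_AM_GM:
  assumes "l > 0"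
  shows "mass_defect k p \<le> (l * nu_mass k p + energy k p / l) / 2"
proof (rule power2_le_imp_le)
  have "((l * nu_mass k p + energy k p / l) / 2)^2 - nu_mass k p * energy k p
      = ((l * nu_mass k p - energy k p / l) / 2)^2"
    using assms by (simp add: power2_eq_square field_simps)
  then show "(mass_defect k p)^2 \<le> ((l * nu_mass k p + energy k p / l) / 2)^2"
    using mass_defect_square_le[of k p] by (smt (verit) zero_le_power2)
  show "0 \<le> (l * nu_mass k p + energy k p / l) / 2"
    using assms nu_mass_nonneg energy_nonneg by simp
qed

definition descendant_energy :: "nat \<Rightarrow> nat \<Rightarrow> int \<Rightarrow> real" where
  "descendant_energy r k j = (\<Sum>i<(2::nat)^r. energy (k + r) (2^r * j + int i))"

lemma descendant_energy_nonneg: "descendant_energy r k j \<ge> 0"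
  unfolding descendant_energy_def by (intro sum_nonneg energy_nonneg)

lemma defect_series_le:
  assumes "l > 0"
  shows "defect_series 1 k j n \<le> l * nu_mass k j + (\<Sum>r<n. descendant_energy r k j / 2^r) / (2 * l)"
proof -
  have level: "(\<Sum>i<(2::nat)^r. (l * nu_mass (k + r) (2^r * j + int i) + energy (k + r) (2^r * j + int i) / l) / 2)
      = l / 2 * nu_mass k j + descendant_energy r k j / (2 * l)" for r
    using assms
    by (simp add: sum.distrib sum_divide_distrib[symmetric] sum_distrib_left[symmetric]
        nu_mass_descendants descendant_energy_def add_divide_distrib)
  have "defect_series 1 k j n
      \<le> (\<Sum>r<n. 1 / 2^r * (\<Sum>i<(2::nat)^r. (l * nu_mass (k + r) (2^r * j + int i)
            + energy (k + r) (2^r * j + int i) / l) / 2))"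
    unfolding defect_series_def by (intro sum_mono mult_left_mono mass_defect_le_AM_GM[OF assms]) simp_all
  also have "\<dots> = l / 2 * nu_mass k j * (\<Sum>r<n. 1 / (2::real)^r) + (\<Sum>r<n. descendant_energy r k j / 2^r) / (2 * l)"
    unfolding level by (simp add: sum.distrib sum_distrib_left sum_divide_distrib algebra_simps)
  also have "\<dots> \<le> l / 2 * nu_mass k j * 2 + (\<Sum>r<n. descendant_energy r k j / 2^r) / (2 * l)"
    using assms nu_mass_nonneg[of k j] by (intro add_right_mono mult_left_mono sum_inverse_power2_le_2) simp
  finally show ?thesis by simp
qed

definition energy_series :: "nat \<Rightarrow> int \<Rightarrow> ennreal" where
  "energy_series k j = (\<Sum>r. ennreal (descendant_energy r k j / 2^r))"

lemma alpha_square_bound: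
  "ennreal ((alpha \<mu> \<nu> (dyadic_interval a k j))^2 * (mu_mass k j)^2 / nu_mass k j) \<le> 2 * energy_series k j"
proof (cases "mu_mass k j = 0 \<or> energy_series k j = \<infinity>")
  case True
  then show ?thesis by auto
next
  case False
  then have pos: "mu_mass k j > 0" using mu_mass_nonneg[of k j] by auto
  have pos': "nu_mass k j > 0" by (rule nu_mass_pos_if_mu_mass_pos[OF pos])
  define t where "t = enn2real (energy_series k j)"
  have "t \<ge> 0" unfolding t_def by simp
  have series: "energy_series k j = ennreal t" unfolding t_def using False by (simp add: less_top)
  have partial: "(\<Sum>r<n. descendant_energy r k j / 2^r) \<le> t" for n
  proof -
    have "ennreal (\<Sum>r<n. descendant_energy r k j / 2^r) = (\<Sum>r<n. ennreal (descendant_energy r k j / 2^r))"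
      using descendant_energy_nonneg by (subst sum_ennreal[symmetric]) auto
    also have "\<dots> \<le> energy_series k j" unfolding energy_series_def by (rule sum_le_suminf) auto
    finally show ?thesis using series \<open>t \<ge> 0\<close> by simp
  qed
  define X where "X = alpha \<mu> \<nu> (dyadic_interval a k j) * mu_mass k j"
  have "X \<ge> 0" unfolding X_def using alpha_nonneg_and_mass_bound(1)[OF pos] pos by simp
  have "X \<le> l * nu_mass k j + t / (2 * l)" if "l > 0" for l
  proof (rule le_of_forall_le_add_div_power2)
    fix n :: nat
    have "X \<le> 2 * mu_mass k j / 2^n + defect_series 1 k j n"
      unfolding X_def by (rule alpha_nonneg_and_mass_bound(2)[OF pos])
    also have "\<dots> \<le> 2 * mu_mass k j / 2^n + (l * nu_mass k j + t / (2 * l))"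
      using defect_series_le[OF that, of k j n] partial[of n] that
      by (smt (verit) divide_right_mono zero_le_mult_iff)
    finally show "X \<le> l * nu_mass k j + t / (2 * l) + 2 * mu_mass k j / 2^n" by simp
  qed
  then have "X^2 \<le> 2 * nu_mass k j * t"
    by (rule square_le_if_forall_le_AM_GM[OF \<open>X \<ge> 0\<close> pos' \<open>t \<ge> 0\<close>])
  then have "(alpha \<mu> \<nu> (dyadic_interval a k j))^2 * (mu_mass k j)^2 / nu_mass k j \<le> 2 * t"
    using pos' unfolding X_def by (simp add: power_mult_distrib field_simps)
  then have "ennreal ((alpha \<mu> \<nu> (dyadic_interval a k j))^2 * (mu_mass k j)^2 / nu_mass k j) \<le> ennreal (2 * t)"
    by (rule ennreal_leI)
  also have "\<dots> = 2 * energy_series k j" using \<open>t \<ge> 0\<close> series by (simp add: ennreal_mult)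
  finally show ?thesis .
qed

end

lemma suminf_inverse_power2_ennreal: "(\<Sum>r. ennreal (1 / 2^r)) = 2"
proof -
  have "(\<Sum>r. ennreal (1 / 2^r)) = ennreal (\<Sum>r. (1/2::real)^r)"
    by (subst suminf_ennreal2[symmetric]) (auto simp: summable_geometric power_one_over)
  also have "(\<Sum>r. (1/2::real)^r) = 2" by (subst suminf_geometric) simp_all
  finally show ?thesis by simp
qed

context dyadic_L2_density
begin

definition quadratic_mass :: "nat \<Rightarrow> ennreal" where
  "quadratic_mass L = (\<integral>\<^sup>+p. ennreal ((mu_mass L p)^2 / nu_mass L p) \<partial>count_space UNIV)"

definition level_energy :: "nat \<Rightarrow> ennreal" where
  "level_energy l = (\<integral>\<^sup>+p. ennreal (energy l p) \<partial>count_space UNIV)"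

definition total_energy :: ennreal where
  "total_energy = (\<Sum>l. level_energy l)"

lemma level_energy_add_quadratic_mass: "level_energy l + quadratic_mass l = quadratic_mass (Suc l)"
proof -
  have "ennreal (energy l p) + ennreal ((mu_mass l p)^2 / nu_mass l p)
      = ennreal ((mu_mass (Suc l) (2*p))^2 / nu_mass (Suc l) (2*p))
        + ennreal ((mu_mass (Suc l) (2*p + 1))^2 / nu_mass (Suc l) (2*p + 1))" for p
  proof -
    have "ennreal (energy l p) + ennreal ((mu_mass l p)^2 / nu_mass l p)
        = ennreal (energy l p + (mu_mass l p)^2 / nu_mass l p)"
      using energy_nonneg nu_mass_nonneg by (simp add: ennreal_plus)
    also have "\<dots> = ennreal ((mu_mass (Suc l) (2*p))^2 / nu_mass (Suc l) (2*p)
        + (mu_mass (Suc l) (2*p + 1))^2 / nu_mass (Suc l) (2*p + 1))"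
      by (simp only: energy_identity)
    also have "\<dots> = ennreal ((mu_mass (Suc l) (2*p))^2 / nu_mass (Suc l) (2*p))
        + ennreal ((mu_mass (Suc l) (2*p + 1))^2 / nu_mass (Suc l) (2*p + 1))"
      using nu_mass_nonneg by (simp add: ennreal_plus)
    finally show ?thesis .
  qed
  then have "level_energy l + quadratic_mass l
      = (\<integral>\<^sup>+p. ennreal ((mu_mass (Suc l) (2*p))^2 / nu_mass (Suc l) (2*p))
          + ennreal ((mu_mass (Suc l) (2*p + 1))^2 / nu_mass (Suc l) (2*p + 1)) \<partial>count_space UNIV)"
    unfolding level_energy_def quadratic_mass_def by (subst nn_integral_add[symmetric]) auto
  also have "\<dots> = quadratic_mass (Suc l)"
    unfolding quadratic_mass_def
    by (rule nn_integral_count_space_even_odd[where f="\<lambda>q. ennreal ((mu_mass (Suc l) q)^2 / nu_mass (Suc l) q)"])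
  finally show ?thesis .
qed

lemma sum_level_energy_add_quadratic_mass: "(\<Sum>l<L. level_energy l) + quadratic_mass 0 = quadratic_mass L"
proof (induction L)
  case (Suc L)
  have "(\<Sum>l<Suc L. level_energy l) + quadratic_mass 0 = level_energy L + ((\<Sum>l<L. level_energy l) + quadratic_mass 0)"
    by (simp add: algebra_simps)
  then show ?case using Suc.IH level_energy_add_quadratic_mass by simp
qed simp

lemma avg_square_nu_mass_le:
  "ennreal ((mu_mass L p)^2 / nu_mass L p) \<le> (\<integral>\<^sup>+x. ennreal ((g x)^2) * indicator (dyadic_interval a L p) x \<partial>\<nu>)"
proof (cases "nu_mass L p = 0")
  case True
  then show ?thesis by simp
next
  case False
  then have pos: "nu_mass L p > 0" using nu_mass_nonneg[of L p] by simp
  define I where "I = dyadic_interval a L p"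
  define c where "c = avg L p"
  have "c \<ge> 0" unfolding c_def by (rule avg_nonneg)
  define G where "G = (\<integral>\<^sup>+x. ennreal ((g x)^2) * indicator I x \<partial>\<nu>)"
  have "G \<le> (\<integral>\<^sup>+x. ennreal ((g x)^2) \<partial>\<nu>)"
    unfolding G_def by (rule nn_integral_mono) (auto simp: indicator_def)
  then have "G < \<infinity>" using nn_integral_g_square_finite by simp
  then obtain r where G: "G = ennreal r" "r \<ge> 0" by (cases G) auto
  have pointwise: "ennreal (2 * c) * (ennreal (g x) * indicator I x)
      \<le> ennreal ((g x)^2) * indicator I x + ennreal (c^2) * indicator I x" for x
  proof -
    have "2 * c * g x \<le> (g x)^2 + c^2" using sum_squares_ge_zero[of "g x - c" 0]
      by (simp add: power2_eq_square algebra_simps)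
    then have "ennreal (2 * c * g x) \<le> ennreal ((g x)^2 + c^2)" by (rule ennreal_leI)
    moreover have "ennreal (2 * c * g x) = ennreal (2 * c) * ennreal (g x)"
      using \<open>c \<ge> 0\<close> g_nonneg[of x] by (simp add: ennreal_mult)
    moreover have "ennreal ((g x)^2 + c^2) = ennreal ((g x)^2) + ennreal (c^2)"
      by (rule ennreal_plus) simp_all
    ultimately show ?thesis by (cases "x \<in> I") auto
  qed
  have "ennreal (2 * c * mu_mass L p) = (\<integral>\<^sup>+x. ennreal (2 * c) * (ennreal (g x) * indicator I x) \<partial>\<nu>)"
    using \<open>c \<ge> 0\<close> mu_mass_nonneg[of L p] emeasure_\<mu>[of I] emeasure_\<mu>_dyadic_interval[of L p]
    by (simp add: I_def ennreal_mult nn_integral_cmult measurable_\<nu>)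
  also have "\<dots> \<le> (\<integral>\<^sup>+x. ennreal ((g x)^2) * indicator I x + ennreal (c^2) * indicator I x \<partial>\<nu>)"
    by (rule nn_integral_mono) (rule pointwise)
  also have "\<dots> = G + ennreal (c^2) * emeasure \<nu> I"
    unfolding G_def by (subst nn_integral_add) (auto simp: measurable_\<nu> sets_\<nu> I_def nn_integral_cmult_indicator)
  also have "\<dots> = ennreal (r + c^2 * nu_mass L p)"
    unfolding G I_def emeasure_\<nu>_dyadic_interval using G(2) nu_mass_nonneg[of L p]
    by (simp add: ennreal_mult ennreal_plus)
  finally have "2 * c * mu_mass L p \<le> r + c^2 * nu_mass L p"
    using G(2) nu_mass_nonneg[of L p] by (subst (asm) ennreal_le_iff) auto
  then have "(mu_mass L p)^2 / nu_mass L p \<le> r"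
    unfolding c_def avg_def using pos by (simp add: field_simps power2_eq_square)
  then have "ennreal ((mu_mass L p)^2 / nu_mass L p) \<le> ennreal r" by (rule ennreal_leI)
  then show ?thesis unfolding G(1)[symmetric] G_def I_def .
qed

lemma quadratic_mass_le: "quadratic_mass L \<le> (\<integral>\<^sup>+x. ennreal ((g x)^2) \<partial>\<nu>)"
proof -
  have "quadratic_mass L
      \<le> (\<integral>\<^sup>+p. (\<integral>\<^sup>+x. ennreal ((g x)^2) * indicator (dyadic_interval a L p) x \<partial>\<nu>) \<partial>count_space UNIV)"
    unfolding quadratic_mass_def by (intro nn_integral_mono avg_square_nu_mass_le)
  also have "\<dots> = (\<integral>\<^sup>+x. ennreal ((g x)^2) \<partial>\<nu>)"
    by (rule nn_integral_split_dyadic_intervals[OF sets_\<nu>, symmetric]) simp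
  finally show ?thesis .
qed

lemma total_energy_le: "total_energy \<le> (\<integral>\<^sup>+x. ennreal ((g x)^2) \<partial>\<nu>)"
  unfolding total_energy_def
proof (rule suminf_le_const)
  fix L
  have "(\<Sum>l<L. level_energy l) \<le> quadratic_mass L"
    unfolding sum_level_energy_add_quadratic_mass[of L, symmetric] by simp
  then show "(\<Sum>l<L. level_energy l) \<le> (\<integral>\<^sup>+x. ennreal ((g x)^2) \<partial>\<nu>)"
    using quadratic_mass_le[of L] by simp
qed simp

lemma nn_integral_energy_series:
  "(\<integral>\<^sup>+j. energy_series k j \<partial>count_space UNIV) = (\<Sum>r. ennreal (1 / 2^r) * level_energy (k + r))"
proof -
  have "(\<integral>\<^sup>+j. ennreal (descendant_energy r k j / 2^r) \<partial>count_space UNIV)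
      = ennreal (1 / 2^r) * level_energy (k + r)" for r
  proof -
    have "(\<integral>\<^sup>+j. ennreal (descendant_energy r k j / 2^r) \<partial>count_space UNIV)
        = ennreal (1 / 2^r) * (\<integral>\<^sup>+j. (\<Sum>i<(2::nat)^r. ennreal (energy (k + r) (2^r * j + int i))) \<partial>count_space UNIV)"
      using energy_nonneg descendant_energy_nonneg
      by (subst nn_integral_cmult[symmetric])
        (simp_all add: descendant_energy_def sum_ennreal ennreal_mult[symmetric])
    also have "\<dots> = ennreal (1 / 2^r) * level_energy (k + r)"
      using nn_integral_count_space_descendants[of "\<lambda>q. ennreal (energy (k + r) q)" r]
      unfolding level_energy_def by simp
    finally show ?thesis .
  qed
  then show ?thesis
    unfolding energy_series_def by (subst nn_integral_suminf) simp_all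
qed

lemma suminf_nn_integral_energy_series_le:
  "(\<Sum>k. \<integral>\<^sup>+j. energy_series k j \<partial>count_space UNIV) \<le> 2 * total_energy"
proof -
  have tail: "(\<Sum>k. level_energy (k + r)) \<le> total_energy" for r
    unfolding total_energy_def by (subst suminf_offset[of _ r]) simp_all
  have "(\<Sum>k. \<integral>\<^sup>+j. energy_series k j \<partial>count_space UNIV)
      = (\<Sum>r. ennreal (1 / 2^r) * (\<Sum>k. level_energy (k + r)))"
    unfolding nn_integral_energy_series by (subst suminf_commute_ennreal) simp
  also have "\<dots> \<le> (\<Sum>r. ennreal (1 / 2^r) * total_energy)"
    by (intro suminf_le mult_left_mono tail) auto
  also have "\<dots> = 2 * total_energy" by (simp add: suminf_inverse_power2_ennreal)
  finally show ?thesis .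
qed

end

section \<open>Almost everywhere finiteness of the square function\<close>

context dyadic_L2_density
begin

definition square_function :: "real \<Rightarrow> ennreal" where
  "square_function x = (\<Sum>k. ennreal ((alpha \<mu> \<nu> (dyadic_interval a k (dyadic_index a k x)))^2))"

definition avg_inf :: "real \<Rightarrow> ennreal" where
  "avg_inf x = (INF k. ennreal (avg k (dyadic_index a k x)))"

lemma square_function_borel [measurable]: "square_function \<in> borel_measurable borel"
  unfolding square_function_def by measurable

lemma avg_inf_borel [measurable]: "avg_inf \<in> borel_measurable borel"
  unfolding avg_inf_def by measurable

lemma nn_integral_square_function_avg_inf_le:
  "(\<integral>\<^sup>+x. square_function x * avg_inf x \<partial>\<mu>) \<le> 4 * (\<integral>\<^sup>+x. ennreal ((g x)^2) \<partial>\<nu>)"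
proof -
  define \<phi> where "\<phi> k j = ennreal ((alpha \<mu> \<nu> (dyadic_interval a k j))^2 * avg k j)" for k j
  have "square_function x * avg_inf x \<le> (\<Sum>k. \<phi> k (dyadic_index a k x))" for x
    unfolding square_function_def ennreal_suminf_multc[symmetric]
  proof (rule suminf_le)
    fix k
    have "avg_inf x \<le> ennreal (avg k (dyadic_index a k x))"
      unfolding avg_inf_def by (rule INF_lower) simp
    then show "ennreal ((alpha \<mu> \<nu> (dyadic_interval a k (dyadic_index a k x)))^2) * avg_inf x
        \<le> \<phi> k (dyadic_index a k x)"
      unfolding \<phi>_def using avg_nonneg by (simp add: ennreal_mult mult_left_mono)
  qed auto
  then have "(\<integral>\<^sup>+x. square_function x * avg_inf x \<partial>\<mu>) \<le> (\<integral>\<^sup>+x. (\<Sum>k. \<phi> k (dyadic_index a k x)) \<partial>\<mu>)"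
    by (intro nn_integral_mono)
  also have "\<dots> = (\<Sum>k. \<integral>\<^sup>+j. \<phi> k j * emeasure \<mu> (dyadic_interval a k j) \<partial>count_space UNIV)"
    by (subst nn_integral_suminf) (simp_all add: measurable_\<mu> nn_integral_dyadic_step_function[OF sets_\<mu>])
  also have "\<dots> \<le> (\<Sum>k. \<integral>\<^sup>+j. 2 * energy_series k j \<partial>count_space UNIV)"
  proof (intro suminf_le nn_integral_mono)
    fix k j
    have "\<phi> k j * emeasure \<mu> (dyadic_interval a k j)
        = ennreal ((alpha \<mu> \<nu> (dyadic_interval a k j))^2 * (mu_mass k j)^2 / nu_mass k j)"
      unfolding \<phi>_def emeasure_\<mu>_dyadic_interval avg_def using mu_mass_nonneg nu_mass_nonneg
      by (simp add: ennreal_mult[symmetric] power2_eq_square)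
    also have "\<dots> \<le> 2 * energy_series k j" by (rule alpha_square_bound)
    finally show "\<phi> k j * emeasure \<mu> (dyadic_interval a k j) \<le> 2 * energy_series k j" .
  qed auto
  also have "\<dots> = 2 * (\<Sum>k. \<integral>\<^sup>+j. energy_series k j \<partial>count_space UNIV)"
    by (simp add: nn_integral_cmult)
  also have "\<dots> \<le> 2 * (2 * total_energy)"
    by (intro mult_left_mono suminf_nn_integral_energy_series_le) simp
  also have "\<dots> \<le> 2 * (2 * (\<integral>\<^sup>+x. ennreal ((g x)^2) \<partial>\<nu>))"
    by (intro mult_left_mono total_energy_le) simp_all
  finally show ?thesis by (simp add: mult.assoc[symmetric])
qed

text \<open>Stopping time: \<open>stopping_indicator q \<delta> k j\<close> marks the intervals of generation \<open>k\<close> inside the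
  unit interval \<open>q\<close> on which the average first drops below \<open>\<delta>\<close>. They are disjoint, cover the part
  of \<open>{avg_inf < \<delta>}\<close> in that unit interval, and each has \<open>\<mu>\<close>-mass at most \<open>\<delta>\<close> times its \<open>\<nu>\<close>-mass.\<close>

definition stopping_indicator :: "int \<Rightarrow> real \<Rightarrow> nat \<Rightarrow> int \<Rightarrow> ennreal" where
  "stopping_indicator q \<delta> k j =
     (if j div 2^k = q \<and> avg k j < \<delta> \<and> (\<forall>k'<k. \<delta> \<le> avg k' (j div 2^(k - k'))) then 1 else 0)"

definition stopping_count :: "int \<Rightarrow> real \<Rightarrow> real \<Rightarrow> ennreal" where
  "stopping_count q \<delta> x = (\<Sum>k. stopping_indicator q \<delta> k (dyadic_index a k x))"

lemma stopping_count_borel [measurable]: "stopping_count q \<delta> \<in> borel_measurable borel"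
  unfolding stopping_count_def by measurable

lemma stopping_indicator_index:
  "stopping_indicator q \<delta> k (dyadic_index a k x) =
     (if dyadic_index a 0 x = q \<and> avg k (dyadic_index a k x) < \<delta>
         \<and> (\<forall>k'<k. \<delta> \<le> avg k' (dyadic_index a k' x)) then 1 else 0)"
proof -
  have "dyadic_index a k x div 2^(k - k') = dyadic_index a k' x" if "k' \<le> k" for k'
    using that by (rule dyadic_index_ancestor)
  moreover have "dyadic_index a k x div 2^k = dyadic_index a 0 x"
    using dyadic_index_ancestor[of 0 k a x] by simp
  ultimately show ?thesis unfolding stopping_indicator_def by simp
qed

lemma stopping_count_le_indicator: "stopping_count q \<delta> x \<le> indicator (dyadic_interval a 0 q) x"
proof (cases "\<exists>k. stopping_indicator q \<delta> k (dyadic_index a k x) = 1")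
  case False
  then have "\<And>k. stopping_indicator q \<delta> k (dyadic_index a k x) = 0"
    unfolding stopping_indicator_def by (auto split: if_splits)
  then show ?thesis unfolding stopping_count_def by simp
next
  case True
  then obtain k0 where k0: "stopping_indicator q \<delta> k0 (dyadic_index a k0 x) = 1" by blast
  then have "dyadic_index a 0 x = q" and k0_stop: "avg k0 (dyadic_index a k0 x) < \<delta>"
    and k0_first: "\<forall>k'<k0. \<delta> \<le> avg k' (dyadic_index a k' x)"
    unfolding stopping_indicator_index by (auto split: if_splits)
  have "stopping_indicator q \<delta> k (dyadic_index a k x) = 0" if "k \<noteq> k0" for k
  proof (rule ccontr)
    assume "stopping_indicator q \<delta> k (dyadic_index a k x) \<noteq> 0"
    then have k_stop: "avg k (dyadic_index a k x) < \<delta>"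
      and k_first: "\<forall>k'<k. \<delta> \<le> avg k' (dyadic_index a k' x)"
      unfolding stopping_indicator_index by (auto split: if_splits)
    show False
    proof (cases "k < k0")
      case True
      with k0_first k_stop show False by force
    next
      case False
      with \<open>k \<noteq> k0\<close> have "k0 < k" by simp
      with k_first k0_stop show False by force
    qed
  qed
  then have "stopping_count q \<delta> x = (\<Sum>k\<in>{k0}. stopping_indicator q \<delta> k (dyadic_index a k x))"
    unfolding stopping_count_def by (intro suminf_finite) auto
  then show ?thesis using k0 \<open>dyadic_index a 0 x = q\<close> by (simp add: mem_dyadic_interval_iff)
qed

lemma one_le_stopping_count:
  assumes x: "x \<in> dyadic_interval a 0 q" and below: "avg_inf x < ennreal \<delta>"
  shows "1 \<le> stopping_count q \<delta> x"
proof -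
  obtain k where "ennreal (avg k (dyadic_index a k x)) < ennreal \<delta>"
    using below unfolding avg_inf_def INF_less_iff by auto
  then have ex: "\<exists>k. avg k (dyadic_index a k x) < \<delta>"
    using avg_nonneg by (auto simp: ennreal_less_iff)
  define k0 where "k0 = (LEAST k. avg k (dyadic_index a k x) < \<delta>)"
  have "avg k0 (dyadic_index a k0 x) < \<delta>" unfolding k0_def by (rule LeastI_ex[OF ex])
  moreover have "\<forall>k'<k0. \<delta> \<le> avg k' (dyadic_index a k' x)"
    unfolding k0_def using not_less_Least by fastforce
  ultimately have "stopping_indicator q \<delta> k0 (dyadic_index a k0 x) = 1"
    using x unfolding stopping_indicator_index by (simp add: mem_dyadic_interval_iff)
  then show ?thesis
    unfolding stopping_count_def
    using sum_le_suminf[of "\<lambda>k. stopping_indicator q \<delta> k (dyadic_index a k x)" "{k0}"] by simp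
qed

lemma nn_integral_stopping_count_\<mu>_le:
  "(\<integral>\<^sup>+x. stopping_count q \<delta> x \<partial>\<mu>) \<le> ennreal \<delta> * (\<integral>\<^sup>+x. stopping_count q \<delta> x \<partial>\<nu>)"
proof -
  have stopped: "stopping_indicator q \<delta> k j * emeasure \<mu> (dyadic_interval a k j)
      \<le> ennreal \<delta> * (stopping_indicator q \<delta> k j * emeasure \<nu> (dyadic_interval a k j))" for k j
  proof (cases "avg k j < \<delta>")
    case True
    then have "mu_mass k j \<le> \<delta> * nu_mass k j"
      using nu_mass_nonneg[of k j] unfolding mu_mass_eq_avg_nu_mass[of k j] by (intro mult_right_mono) auto
    then have "ennreal (mu_mass k j) \<le> ennreal (\<delta> * nu_mass k j)" by (rule ennreal_leI)
    also have "\<dots> = ennreal \<delta> * ennreal (nu_mass k j)"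
      using nu_mass_nonneg[of k j]
      by (cases "\<delta> \<ge> 0") (simp_all add: ennreal_mult ennreal_neg mult_nonpos_nonneg)
    finally have "ennreal (mu_mass k j) \<le> ennreal \<delta> * ennreal (nu_mass k j)" .
    then show ?thesis
      unfolding emeasure_\<mu>_dyadic_interval emeasure_\<nu>_dyadic_interval stopping_indicator_def by simp
  qed (simp add: stopping_indicator_def)
  have "(\<integral>\<^sup>+x. stopping_count q \<delta> x \<partial>\<mu>)
      = (\<Sum>k. \<integral>\<^sup>+j. stopping_indicator q \<delta> k j * emeasure \<mu> (dyadic_interval a k j) \<partial>count_space UNIV)"
    unfolding stopping_count_def
    by (subst nn_integral_suminf) (simp_all add: measurable_\<mu> nn_integral_dyadic_step_function[OF sets_\<mu>])
  also have "\<dots> \<le> (\<Sum>k. \<integral>\<^sup>+j. ennreal \<delta> * (stopping_indicator q \<delta> k j * emeasure \<nu> (dyadic_interval a k j))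
      \<partial>count_space UNIV)"
    by (intro suminf_le nn_integral_mono stopped) auto
  also have "\<dots> = ennreal \<delta> * (\<integral>\<^sup>+x. stopping_count q \<delta> x \<partial>\<nu>)"
    unfolding stopping_count_def
    by (subst nn_integral_suminf) (simp_all add: measurable_\<nu> nn_integral_dyadic_step_function[OF sets_\<nu>]
        nn_integral_cmult)
  finally show ?thesis .
qed

lemma avg_inf_eq_0_null: "{x. avg_inf x = 0} \<inter> dyadic_interval a 0 q \<in> null_sets \<mu>"
proof -
  define Z where "Z = {x. avg_inf x = 0} \<inter> dyadic_interval a 0 q"
  have [measurable]: "Z \<in> sets borel" unfolding Z_def by measurable
  have bound: "emeasure \<mu> Z \<le> ennreal \<delta> * ennreal (nu_mass 0 q)" if "\<delta> > 0" for \<delta>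
  proof -
    have "emeasure \<mu> Z = (\<integral>\<^sup>+x. indicator Z x \<partial>\<mu>)" by (simp add: sets_\<nu>)
    also have "\<dots> \<le> (\<integral>\<^sup>+x. stopping_count q \<delta> x \<partial>\<mu>)"
      using one_le_stopping_count[of _ q \<delta>] that
      by (intro nn_integral_mono) (auto simp: Z_def indicator_def)
    also have "\<dots> \<le> ennreal \<delta> * (\<integral>\<^sup>+x. stopping_count q \<delta> x \<partial>\<nu>)"
      by (rule nn_integral_stopping_count_\<mu>_le)
    also have "\<dots> \<le> ennreal \<delta> * (\<integral>\<^sup>+x. indicator (dyadic_interval a 0 q) x \<partial>\<nu>)"
      by (intro mult_left_mono nn_integral_mono stopping_count_le_indicator) simp
    finally show ?thesis by (simp add: sets_\<nu> emeasure_\<nu>_dyadic_interval)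
  qed
  then have "emeasure \<mu> Z \<le> 0 + ennreal e" if "e > 0" for e
  proof -
    let ?\<delta> = "e / (nu_mass 0 q + 1)"
    have "?\<delta> * nu_mass 0 q \<le> e"
      using that nu_mass_nonneg[of 0 q] by (simp add: field_simps)
    then have "ennreal ?\<delta> * ennreal (nu_mass 0 q) \<le> ennreal e"
      using that nu_mass_nonneg[of 0 q] by (simp add: ennreal_mult[symmetric] ennreal_leI)
    moreover have "?\<delta> > 0" using that nu_mass_nonneg[of 0 q] by simp
    ultimately show ?thesis using bound[of ?\<delta>] by simp
  qed
  then have "emeasure \<mu> Z \<le> 0" by (rule ennreal_le_epsilon) simp
  then show ?thesis unfolding Z_def[symmetric] by (simp add: null_sets_def sets_\<nu>)
qed

lemma AE_avg_inf_nonzero: "AE x in \<mu>. avg_inf x \<noteq> 0"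
proof (rule AE_I')
  show "(\<Union>q. {x. avg_inf x = 0} \<inter> dyadic_interval a 0 q) \<in> null_sets \<mu>"
    by (intro null_sets_UN' avg_inf_eq_0_null) simp
  show "{x \<in> space \<mu>. \<not> avg_inf x \<noteq> 0} \<subseteq> (\<Union>q. {x. avg_inf x = 0} \<inter> dyadic_interval a 0 q)"
    using mem_dyadic_interval_index by blast
qed

lemma AE_square_function_finite: "AE x in \<mu>. square_function x < \<infinity>"
proof -
  have "(\<integral>\<^sup>+x. square_function x * avg_inf x \<partial>\<mu>) < \<infinity>"
    using le_less_trans[OF nn_integral_square_function_avg_inf_le] nn_integral_g_square_finite
    by (simp add: ennreal_mult_less_top)
  then have "(\<integral>\<^sup>+x. square_function x * avg_inf x \<partial>\<mu>) \<noteq> \<infinity>" by simp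
  then have "AE x in \<mu>. square_function x * avg_inf x \<noteq> \<infinity>"
    by (intro nn_integral_PInf_AE) (simp add: measurable_\<mu>)
  with AE_avg_inf_nonzero show ?thesis
    by eventually_elim (auto simp: ennreal_mult_eq_top_iff less_top)
qed

end

section \<open>Generalised dyadic systems are translated dyadic grids\<close>

lemma gen_dyadic_systemE:
  assumes "gen_dyadic_system D" "I \<in> D k"
  obtains b where "I = {b..<b + inverse (2^k)}"
  using assms unfolding gen_dyadic_system_def by blast

lemma gen_dyadic_system_separated:
  assumes G: "gen_dyadic_system D" and b: "{b..<b + inverse (2^k)} \<in> D k"
    and c: "{c..<c + inverse (2^k)} \<in> D k" and "b < c"
  shows "b + inverse (2^k) \<le> c"
proof (rule ccontr)
  assume "\<not> ?thesis"
  then have "c \<in> {b..<b + inverse (2^k)}" "c \<in> {c..<c + inverse (2^k)}" using \<open>b < c\<close> by auto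
  with G b c have "{b..<b + inverse (2^k)} = {c..<c + inverse (2^k)}"
    unfolding gen_dyadic_system_def by metis
  then have "c \<in> {b..<b + inverse (2^k)}" "b \<in> {c..<c + inverse (2^k)}" by auto
  with \<open>b < c\<close> show False by simp
qed

lemma gen_dyadic_system_right_neighbour:
  assumes G: "gen_dyadic_system D" and b: "{b..<b + inverse (2^k)} \<in> D k"
  shows "{b + inverse (2^k)..<b + inverse (2^k) + inverse (2^k)} \<in> D k"
proof -
  let ?l = "inverse (2^k) :: real"
  obtain I where I: "I \<in> D k" "b + ?l \<in> I" using G unfolding gen_dyadic_system_def by metis
  obtain c where c: "I = {c..<c + ?l}" using gen_dyadic_systemE[OF G I(1)] by blast
  have "c \<le> b + ?l" "b < c" using I(2) c by auto
  moreover have "b + ?l \<le> c" using gen_dyadic_system_separated[OF G b] I(1) c \<open>b < c\<close> by blast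
  ultimately show ?thesis using I c by simp
qed

lemma gen_dyadic_system_translates:
  assumes G: "gen_dyadic_system D" and b: "{b..<b + inverse (2^k)} \<in> D k"
  shows "{b + real m * inverse (2^k)..<b + real m * inverse (2^k) + inverse (2^k)} \<in> D k"
proof (induction m)
  case 0
  then show ?case using b by simp
next
  case (Suc m)
  from gen_dyadic_system_right_neighbour[OF G Suc] show ?case by (simp add: algebra_simps)
qed

lemma gen_dyadic_system_grid:
  assumes G: "gen_dyadic_system D" and b: "{b..<b + inverse (2^k)} \<in> D k" and I: "I \<in> D k"
  shows "\<exists>j::int. I = {b + real_of_int j * inverse (2^k)..<b + real_of_int j * inverse (2^k) + inverse (2^k)}"
proof -
  let ?l = "inverse (2^k) :: real"
  have reach: "\<exists>m::nat. d + real m * ?l = e"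
    if d: "{d..<d + ?l} \<in> D k" and e: "{e..<e + ?l} \<in> D k" and "d \<le> e" for d e
  proof -
    define m where "m = nat \<lfloor>(e - d) / ?l\<rfloor>"
    have "real m \<le> (e - d) / ?l" "(e - d) / ?l < real m + 1"
      using \<open>d \<le> e\<close> unfolding m_def by (auto simp: of_nat_nat)
    then have m: "d + real m * ?l \<le> e" "e < d + real m * ?l + ?l"
      by (auto simp: field_simps)
    show ?thesis
    proof (rule ccontr)
      assume "\<nexists>m. d + real m * ?l = e"
      then have "d + real m * ?l \<noteq> e" by blast
      with m(1) have "d + real m * ?l < e" by simp
      from gen_dyadic_system_separated[OF G gen_dyadic_system_translates[OF G d] e this] m
      show False by simp
    qed
  qed
  obtain c where c: "I = {c..<c + ?l}" using gen_dyadic_systemE[OF G I] by blast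
  show ?thesis
  proof (cases "b \<le> c")
    case True
    obtain m where "b + real m * ?l = c" using reach[OF b _ True] I c by blast
    then show ?thesis using c by (intro exI[of _ "int m"]) simp
  next
    case False
    obtain m where "c + real m * ?l = b" using reach[of c b] I c b False by auto
    then show ?thesis using c by (intro exI[of _ "- int m"]) auto
  qed
qed

lemma gen_dyadic_system_nested:
  assumes G: "gen_dyadic_system D" and b: "{b..<b + 1} \<in> D 0"
  shows "{b..<b + inverse (2^k)} \<in> D k"
proof (induction k)
  case 0
  then show ?case using b by simp
next
  case (Suc k)
  let ?h = "inverse (2^Suc k) :: real"
  obtain J1 J2 where J: "J1 \<in> D (Suc k)" "J2 \<in> D (Suc k)" "{b..<b + inverse (2^k)} = J1 \<union> J2"
    using G Suc unfolding gen_dyadic_system_def by meson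
  have "J = {b..<b + ?h}"
    if J: "J \<in> D (Suc k)" "J \<subseteq> {b..<b + inverse (2^k)}" "b \<in> J" for J
  proof -
    obtain c where c: "J = {c..<c + ?h}" using gen_dyadic_systemE[OF G J(1)] by blast
    then have "c \<in> J" by simp
    then have "b \<le> c" using J(2) by auto
    with c J(3) show ?thesis by auto
  qed
  moreover have "b \<in> J1 \<or> b \<in> J2"
    using J(3) by (metis Un_iff atLeastLessThan_iff inverse_positive_iff_positive
        less_add_same_cancel1 order_refl zero_less_numeral zero_less_power)
  ultimately show ?case using J by blast
qed

theorem gen_dyadic_system_eq_dyadic_intervals:
  assumes G: "gen_dyadic_system D"
  obtains a where "\<And>k I. I \<in> D k \<Longrightarrow> \<exists>j. I = dyadic_interval a k j"
proof -
  obtain I where I: "I \<in> D 0" "0 \<in> I" using G unfolding gen_dyadic_system_def by metis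
  obtain b where "I = {b..<b + inverse (2^0)}" using gen_dyadic_systemE[OF G I(1)] by blast
  then have b: "{b..<b + 1} \<in> D 0" using I by simp
  have "\<exists>j. I = dyadic_interval b k j" if "I \<in> D k" for k I
  proof -
    from gen_dyadic_system_grid[OF G gen_dyadic_system_nested[OF G b] that] obtain j :: int where
      "I = {b + real_of_int j * inverse (2^k)..<b + real_of_int j * inverse (2^k) + inverse (2^k)}"
      by blast
    then show ?thesis unfolding dyadic_interval_def by (intro exI[of _ j]) (simp add: field_simps)
  qed
  then show ?thesis by (rule that)
qed

lemma infsum_dyadic_system_le_suminf:
  fixes D :: "nat \<Rightarrow> real set set" and A :: "real set \<Rightarrow> real"
  assumes D: "\<And>k I. I \<in> D k \<Longrightarrow> \<exists>j. I = dyadic_interval a k j"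
  shows "(\<Sum>\<^sub>\<infinity>I\<in>(\<Union>k. D k). ennreal ((A I)\<^sup>2 * indicator I x))
    \<le> (\<Sum>k. ennreal ((A (dyadic_interval a k (dyadic_index a k x)))^2))"
proof -
  define J where "J k = dyadic_interval a k (dyadic_index a k x)" for k
  define f where "f I = ennreal ((A I)\<^sup>2 * indicator I x)" for I
  have "inj J" unfolding J_def by (rule inj_dyadic_interval_index)
  have "sum f F \<le> (\<Sum>k. ennreal ((A (J k))^2))" if F: "finite F" "F \<subseteq> (\<Union>k. D k)" for F
  proof -
    define K where "K = J -` F"
    have "finite K" unfolding K_def using F \<open>inj J\<close> by (auto intro: finite_vimageI)
    have "x \<notin> I" if "I \<in> F - J ` K" for I
    proof
      assume "x \<in> I"
      from that F obtain k j where "I = dyadic_interval a k j" using D by blast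
      with \<open>x \<in> I\<close> have "I = J k" by (simp add: J_def mem_dyadic_interval_iff)
      with that show False by (auto simp: K_def)
    qed
    then have "sum f F = sum f (J ` K)"
      using F by (intro sum.mono_neutral_right) (auto simp: K_def f_def)
    also have "\<dots> = (\<Sum>k\<in>K. ennreal ((A (J k))^2))"
      using \<open>inj J\<close> by (subst sum.reindex) (auto simp: f_def J_def mem_dyadic_interval_index inj_on_def)
    also have "\<dots> \<le> (\<Sum>k. ennreal ((A (J k))^2))"
      using \<open>finite K\<close> by (intro sum_le_suminf) auto
    finally show ?thesis .
  qed
  then have "(\<Sum>\<^sub>\<infinity>I\<in>(\<Union>k. D k). f I) \<le> (\<Sum>k. ennreal ((A (J k))^2))"
    by (subst nonneg_infsum_complete) (auto intro!: SUP_least)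
  then show ?thesis unfolding f_def J_def .
qed

theorem mainTheorem12:
  fixes D :: "nat \<Rightarrow> real set set" and \<nu> :: "real measure" and g :: "real \<Rightarrow> real"
  assumes "gen_dyadic_system D"
    and "radon_measure \<nu>"
    and "dyadically_doubling D \<nu>"
    and "g \<in> borel_measurable \<nu>" and "\<And>x. g x \<ge> 0"
    and "integrable \<nu> (\<lambda>x. (g x)\<^sup>2)"
  shows "AE x in density \<nu> (\<lambda>x. ennreal (g x)).
           (\<Sum>\<^sub>\<infinity>I\<in>(\<Union>k. D k).
              ennreal ((alpha (density \<nu> (\<lambda>x. ennreal (g x))) \<nu> I)\<^sup>2 * indicator I x)) < \<infinity>"
proof -
  obtain a where a: "\<And>k I. I \<in> D k \<Longrightarrow> \<exists>j. I = dyadic_interval a k j"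
    using gen_dyadic_system_eq_dyadic_intervals[OF assms(1)] by blast
  interpret dyadic_L2_density a \<nu> g
    using assms(2,4-6) by unfold_locales (auto simp: radon_measure_def)
  show ?thesis
    using AE_square_function_finite
  proof eventually_elim
    case (elim x)
    then show ?case
      using infsum_dyadic_system_le_suminf[OF a, where A="alpha \<mu> \<nu>" and x=x] unfolding square_function_def
      by (rule le_less_trans[rotated])
  qed
qed

end
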